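(* For every $t\in[T]$ and every $x\in\mathbb R^d$ with $\|x\|_2\le1$, the estimates produced by Algorithm 1 satisfy $$\max_{A\in\mathcal A}\mathbb E\Big[\sum_{k=1}^K\langle x,\hat\theta_{t,k}-\tilde\theta_{t,k}\rangle(A)_k\,\Big|\,\mathcal F_{t-1}\Big]\le \frac{m}{t^2}.$$
   Context: Fix integers $K\ge2$, $1\le m<K$, $d\ge1$ and a horizon $T\ge3$. Let $\mathcal A=\{A\in\{0,1\}^K:\sum_{k=1}^K(A)_k\le m\}$, where $(A)_k$ denotes the $k$-th coordinate, and let $\mathrm{conv}(\mathcal A)$ be its convex hull. Contexts are drawn i.i.d. from a distribution $\mathcal D$ on $\mathbb R^d$ with $\|X\|_2\le1$ almost surely and $\Sigma=\mathbb E[XX^\top]\succ0$; $\lambda_{\min}(\Sigma)$ is its smallest eigenvalue. Protocol: in each round $t=1,\dots,T$ the environment fixes vectors $\theta_{t,1},\dots,\theta_{t,K}\in\mathbb R^d$ with $\|\theta_{t,k}\|_2\le1$ (not depending on the learner's actions), a context $X_t\sim\mathcal D$ is drawn independently of the past, the learner observes $X_t$, plays $A_t\in\mathcal A$, suffers $\sum_k\ell_t(X_t,k)(A_t)_k$ and observes $\ell_t(X_t,k)$ for every $k$ with $(A_t)_k=1$; all losses satisfy $\ell_t(x,k)\in[-1,1]$. Let $\mathcal F_t=\sigma(X_1,A_1,\dots,X_t,A_t)$ and $H(a)=-\sum_{k=1}^K a_k\ln a_k$ (with $0\ln 0=0$) for $a\in\mathrm{conv}(\mathcal A)$. Parameters: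 $c_1=\sqrt{(d+\ln T/\lambda_{\min}(\Sigma))K\ln T/(m\ln(K/m))}$, assumed $\ge1$; $c_2=8K/\lambda_{\min}(\Sigma)$; $\beta'_1=c_1$ and $\beta'_{t+1}=\beta'_t+c_1\big(1+(m\ln(K/m))^{-1}\sum_{s=1}^tH(\bar A_s(X_s))\big)^{-1/2}$; $\beta_t=\max\{2,c_2\ln T,\beta'_t\}$; $\eta_t=1/\beta_t$; $\alpha_t=4K\ln(t)/\lambda_{\min}(\Sigma)$; $\gamma_t=\alpha_t\eta_t$; $M_t=\lceil 4K\ln(t)/(\gamma_t\lambda_{\min}(\Sigma))\rceil=\lceil 1/\eta_t\rceil$ (the latter expression also used at $t=1$); $E=\{e_1,\dots,e_K\}\subseteq\mathcal A$ the standard basis vectors. Algorithm 1: set $\tilde\theta_{0,k}=0$. In round $t$: for a context $x$ let $\bar A_t(x)\in\arg\min_{a\in\mathrm{conv}(\mathcal A)}\{\sum_{s=1}^{t-1}\sum_{k}\langle x,\tilde\theta_{s,k}\rangle a_k-H(a)/\eta_t\}$; let $p_t(\cdot|x)$ be any distribution on $\mathcal A$ with $\sum_a p_t(a|x)\,a=\bar A_t(x)$; let $\pi_t(a|x)=(1-\gamma_t)p_t(a|x)+\gamma_t\mathbf 1[a\in E]/K$; sample $A_t\sim\pi_t(\cdot|X_t)$. Then draw $M_t$ fresh independent pairs $X(n)\sim\mathcal D$, $A(n)\sim\pi_t(\cdot|X(n))$, set $C_{n,k}=\prod_{j=1}^n\big(I-(A(j))_kX(j)X(j)^\top/2\big)$,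 $\widehat\Sigma^+_{t,k}=\big(I+\sum_{n=1}^{M_t}C_{n,k}\big)/2$, and $\tilde\theta_{t,k}=\widehat\Sigma^+_{t,k}X_t\,\ell_t(X_t,k)(A_t)_k$ for all $k\in[K]$. Unbiased reference estimator: $\Sigma_{t,k}=\mathbb E[(A_t)_kX_tX_t^\top\mid\mathcal F_{t-1}]$ and $\hat\theta_{t,k}=\Sigma_{t,k}^{-1}X_t\,\ell_t(X_t,k)(A_t)_k$. *)

theory Defs
  imports "HOL-Probability.Probability"
begin

text \<open>Actions are 0/1 vectors indexed by a finite type 'k with CARD('k) = K.\<close>
definition actions :: "nat \<Rightarrow> (real^'k) set" where
  "actions m = {A. (\<forall>k. A$k = 0 \<or> A$k = 1) \<and> (\<Sum>k\<in>UNIV. A$k) \<le> real m}"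

definition basis_actions :: "(real^'k) set" where
  "basis_actions = {axis k 1 | k. True}"

definition ent :: "real^'k \<Rightarrow> real" where
  "ent a = - (\<Sum>k\<in>UNIV. if a$k = 0 then 0 else a$k * ln (a$k))"

definition lambda_min :: "real^'n^'n \<Rightarrow> real" where
  "lambda_min M = Min {l. \<exists>v. v \<noteq> 0 \<and> M *v v = l *\<^sub>R v}"

definition outer :: "real^'d \<Rightarrow> real^'d^'d" where
  "outer x = (\<chi> i j. x$i * x$j)"

definition second_moment :: "(real^'d) measure \<Rightarrow> real^'d^'d" where
  "second_moment D = (\<chi> i j. \<integral>x. x$i * x$j \<partial>D)"

definition c1 :: "real \<Rightarrow> nat \<Rightarrow> nat \<Rightarrow> nat \<Rightarrow> nat \<Rightarrow> real" where
  "c1 lam d K m T =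
     sqrt ((real d + ln (real T) / lam) * real K * ln (real T) / (real m * ln (real K / real m)))"

definition c2 :: "real \<Rightarrow> nat \<Rightarrow> real" where
  "c2 lam K = 8 * real K / lam"

definition beta_of :: "real \<Rightarrow> nat \<Rightarrow> nat \<Rightarrow> real \<Rightarrow> real" where
  "beta_of lam K T b = max (max 2 (c2 lam K * ln (real T))) b"

text \<open>th s k is the estimate tilde-theta_{s,k} of round s, Xs s the context of round s.\<close>
definition reg_obj ::
  "(nat \<Rightarrow> 'k::finite \<Rightarrow> real^'d) \<Rightarrow> nat \<Rightarrow> real \<Rightarrow> real^'d \<Rightarrow> real^'k \<Rightarrow> real" where
  "reg_obj th t eta x a = (\<Sum>s\<in>{1..<t}. \<Sum>k\<in>UNIV. (x \<bullet> th s k) * a$k) - ent a / eta"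

definition abar ::
  "nat \<Rightarrow> (nat \<Rightarrow> 'k::finite \<Rightarrow> real^'d) \<Rightarrow> nat \<Rightarrow> real \<Rightarrow> real^'d \<Rightarrow> real^'k" where
  "abar m th t eta x = (SOME a. a \<in> convex hull (actions m) \<and>
      (\<forall>b \<in> convex hull (actions m). reg_obj th t eta x a \<le> reg_obj th t eta x b))"

text \<open>bstate n = (beta'_{n+1}, sum_{s=1}^n H(abar_s(X_s))).\<close>
fun bstate :: "real \<Rightarrow> nat \<Rightarrow> nat \<Rightarrow> (nat \<Rightarrow> real^'d) \<Rightarrow> (nat \<Rightarrow> 'k::finite \<Rightarrow> real^'d)
    \<Rightarrow> nat \<Rightarrow> real \<times> real" where
  "bstate lam m T Xs th 0 = (c1 lam CARD('d) CARD('k) m T, 0)"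
| "bstate lam m T Xs th (Suc n) =
     (let b = fst (bstate lam m T Xs th n);
          S = snd (bstate lam m T Xs th n) +
              ent (abar m th (Suc n) (1 / beta_of lam CARD('k) T b) (Xs (Suc n)))
      in (b + c1 lam CARD('d) CARD('k) m T / sqrt (1 + S / (real m * ln (real CARD('k) / real m))), S))"

definition eta_t :: "real \<Rightarrow> nat \<Rightarrow> nat \<Rightarrow> (nat \<Rightarrow> real^'d) \<Rightarrow> (nat \<Rightarrow> 'k::finite \<Rightarrow> real^'d)
    \<Rightarrow> nat \<Rightarrow> real" where
  "eta_t lam m T Xs th t = 1 / beta_of lam CARD('k) T (fst (bstate lam m T Xs th (t - 1)))"

definition alpha_t :: "real \<Rightarrow> nat \<Rightarrow> nat \<Rightarrow> real" where
  "alpha_t lam K t = 4 * real K * ln (real t) / lam"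

definition M_t :: "real \<Rightarrow> nat \<Rightarrow> nat \<Rightarrow> real \<Rightarrow> nat" where
  "M_t lam K t eta = (if t = 1 then nat \<lceil>1 / eta\<rceil>
      else nat \<lceil>4 * real K * ln (real t) / ((alpha_t lam K t * eta) * lam)\<rceil>)"

definition mix_policy ::
  "real \<Rightarrow> (real^'d \<Rightarrow> real^'k \<Rightarrow> real) \<Rightarrow> real^'d \<Rightarrow> real^'k \<Rightarrow> real" where
  "mix_policy gam p x a = (1 - gam) * p x a
      + gam * (if a \<in> basis_actions then 1 / real CARD('k) else 0)"

definition pair_law :: "(real^'d) measure \<Rightarrow> nat \<Rightarrow> (real^'d \<Rightarrow> real^'k \<Rightarrow> real)
    \<Rightarrow> ((real^'d) \<times> (real^'k)) measure" where
  "pair_law D m pol = density (D \<Otimes>\<^sub>M count_space (actions m)) (\<lambda>(x, a). ennreal (pol x a))"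

fun Cmat :: "'k::finite \<Rightarrow> (nat \<Rightarrow> (real^'d) \<times> (real^'k)) \<Rightarrow> nat \<Rightarrow> real^'d^'d" where
  "Cmat k w 0 = mat 1"
| "Cmat k w (Suc n) = Cmat k w n ** (mat 1 - ((snd (w (Suc n)))$k / 2) *\<^sub>R outer (fst (w (Suc n))))"

definition Sigma_hat_plus :: "nat \<Rightarrow> 'k::finite \<Rightarrow> (nat \<Rightarrow> (real^'d) \<times> (real^'k)) \<Rightarrow> real^'d^'d" where
  "Sigma_hat_plus M k w = (1/2) *\<^sub>R (mat 1 + (\<Sum>n\<in>{1..M}. Cmat k w n))"

text \<open>Sigma_{t,k} = E[(A_t)_k X_t X_t^T | F_{t-1}]\<close>
definition Sigma_tk :: "((real^'d) \<times> (real^'k)) measure \<Rightarrow> 'k \<Rightarrow> real^'d^'d" where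
  "Sigma_tk Q k = (\<chi> i j. \<integral>z. (snd z)$k * (fst z)$i * (fst z)$j \<partial>Q)"

end

theory Submission
  imports Defs "HOL-Real_Asymp.Real_Asymp"
begin

text \<open>
  Write B = I - Sigma_{t,k}/2. The factors of C_{n,k} are i.i.d. with mean B, so
  E[Sigma_hat^+_{t,k}] = (I + B + ... + B^M)/2, a truncated Neumann series with
  E[Sigma_hat^+_{t,k}] Sigma_{t,k} = I - B^{M+1}. The fresh samples are independent of (X_t, A_t)
  and E[X_t (A_t)_k l_t(X_t, k)] = Sigma_{t,k} theta_k, hence the conditional expectation of
  <x, theta_hat_{t,k} - theta_tilde_{t,k}> equals <x, B^{M+1} theta_k>.
  Uniform exploration with rate gamma_t plays every arm with probability at least gamma_t/K, so
  (gamma_t/K) lambda_min(Sigma) I <= Sigma_{t,k} <= I and ||B|| <= 1 - gamma_t lambda_min(Sigma)/(2K);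
  the choice of M_t makes the (M_t+1)-st power of this number at most 1/t^2, and A has at most m
  nonzero coordinates. When gamma_t = 0 (t = 1), Sigma_{t,k} is still invertible because the
  entropy regulariser keeps every coordinate of the leader abar_t strictly positive.
\<close>

section \<open>Symmetric matrices and the smallest eigenvalue\<close>

lemma symmetric_matrix_inner_swap:
  fixes B :: "real^'n^'n"
  assumes "transpose B = B"
  shows "u \<bullet> (B *v v) = v \<bullet> (B *v u)"
proof -
  have "u \<bullet> (B *v v) = (transpose B *v u) \<bullet> v"
    by (simp add: dot_lmul_matrix transpose_matrix_vector)
  then show ?thesis using assms by (simp add: inner_commute)
qed

lemma symmetric_matrix_quadratic_form_add:
  fixes B :: "real^'n^'n"
  assumes "transpose B = B"
  shows "(u + s *\<^sub>R v) \<bullet> (B *v (u + s *\<^sub>R v))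
    = u \<bullet> (B *v u) + 2 * s * (u \<bullet> (B *v v)) + s^2 * (v \<bullet> (B *v v))"
  using symmetric_matrix_inner_swap[OF assms, of v u]
  by (simp add: matrix_vector_right_distrib matrix_vector_mult_scaleR inner_add_left
      inner_add_right algebra_simps power2_eq_square)

lemma quadratic_nonneg_imp_discriminant_le:
  fixes a b c :: real
  assumes nonneg: "\<forall>s. 0 \<le> a + 2 * s * b + s^2 * c"
  shows "b^2 \<le> a * c"
proof -
  have a: "0 \<le> a" using nonneg[rule_format, of 0] by simp
  have c: "0 \<le> c"
  proof (rule ccontr)
    assume "\<not> 0 \<le> c"
    define s where "s = a / (- c) + 1"
    have "0 \<le> a / (- c)" using a \<open>\<not> 0 \<le> c\<close> by (intro divide_nonneg_pos) auto
    then have "s > a / (- c)" "s \<ge> 1" by (auto simp: s_def)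
    then have "s^2 > a / (- c)" by (smt (verit) power2_eq_square mult_le_cancel_left1)
    then have "a + s^2 * c < 0" using \<open>\<not> 0 \<le> c\<close> by (simp add: field_simps)
    moreover have "0 \<le> a + 2 * s * b + s^2 * c" "0 \<le> a + 2 * (- s) * b + (- s)^2 * c"
      using nonneg by blast+
    ultimately show False by simp
  qed
  show ?thesis
  proof (cases "c = 0")
    case True
    have "b = 0"
    proof (rule ccontr)
      assume "b \<noteq> 0"
      have "0 \<le> a + 2 * (- (a + 1) / (2 * b)) * b + (- (a + 1) / (2 * b))^2 * c"
        using nonneg by blast
      with \<open>b \<noteq> 0\<close> True show False by (simp add: field_simps)
    qed
    then show ?thesis using a c by simp
  next
    case False
    with c have "c > 0" by simp
    have "0 \<le> a + 2 * (- b / c) * b + (- b / c)^2 * c" using nonneg by blast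
    with \<open>c > 0\<close> show ?thesis by (simp add: field_simps power2_eq_square)
  qed
qed

lemma psd_matrix_Cauchy_Schwarz:
  fixes B :: "real^'n^'n"
  assumes "transpose B = B" and "\<forall>v. 0 \<le> v \<bullet> (B *v v)"
  shows "(u \<bullet> (B *v v))^2 \<le> (u \<bullet> (B *v u)) * (v \<bullet> (B *v v))"
  using assms by (intro quadratic_nonneg_imp_discriminant_le)
    (metis symmetric_matrix_quadratic_form_add)

lemma psd_matrix_norm_le:
  fixes B :: "real^'n^'n"
  assumes sym: "transpose B = B" and "0 \<le> c"
    and psd: "\<forall>v. 0 \<le> v \<bullet> (B *v v)" and le: "\<forall>v. v \<bullet> (B *v v) \<le> c * (v \<bullet> v)"
  shows "norm (B *v v) \<le> c * norm v"
proof -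
  define w where "w = B *v v"
  have "(norm w ^ 2)^2 = (w \<bullet> (B *v v))^2" by (simp add: w_def dot_square_norm)
  also have "\<dots> \<le> (w \<bullet> (B *v w)) * (v \<bullet> (B *v v))"
    by (rule psd_matrix_Cauchy_Schwarz[OF sym psd])
  also have "\<dots> \<le> (c * norm w ^ 2) * (c * norm v ^ 2)"
    using le psd \<open>0 \<le> c\<close> by (intro mult_mono) (auto simp: dot_square_norm)
  finally have "(norm w ^ 2) * (norm w ^ 2) \<le> (c * norm v)^2 * (norm w ^ 2)"
    by (simp add: power2_eq_square algebra_simps)
  then have "w = 0 \<or> norm w ^ 2 \<le> (c * norm v)^2"
    using mult_le_cancel_right_pos[of "norm w ^ 2" "norm w ^ 2" "(c * norm v)^2"] by auto
  then show ?thesis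
    using \<open>0 \<le> c\<close> by (auto simp: w_def power2_le_iff_abs_le)
qed

lemma symmetric_matrix_eigenvalues_finite:
  fixes S :: "real^'n^'n"
  assumes sym: "transpose S = S"
  shows "finite {l. \<exists>v. v \<noteq> 0 \<and> S *v v = l *\<^sub>R v}"
proof -
  define E where "E = {l. \<exists>v. v \<noteq> 0 \<and> S *v v = l *\<^sub>R v}"
  define ev where "ev l = (SOME v. v \<noteq> 0 \<and> S *v v = l *\<^sub>R v)" for l
  have ev: "ev l \<noteq> 0" "S *v ev l = l *\<^sub>R ev l" if "l \<in> E" for l
    using someI_ex[of "\<lambda>v. v \<noteq> 0 \<and> S *v v = l *\<^sub>R v"] that by (auto simp: E_def ev_def)
  have inj: "inj_on ev E"
  proof (rule inj_onI)
    fix l1 l2 assume "l1 \<in> E" "l2 \<in> E" "ev l1 = ev l2"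
    then have "l1 *\<^sub>R ev l1 = l2 *\<^sub>R ev l1" using ev(2) by metis
    then show "l1 = l2" using ev(1)[OF \<open>l1 \<in> E\<close>] by (simp add: scaleR_cancel_right)
  qed
  have orth: "pairwise orthogonal (ev ` E)"
  proof (rule pairwiseI)
    fix u w assume "u \<in> ev ` E" "w \<in> ev ` E" "u \<noteq> w"
    then obtain l1 l2 where l: "l1 \<in> E" "l2 \<in> E" "u = ev l1" "w = ev l2" "l1 \<noteq> l2" by auto
    have "l1 * (u \<bullet> w) = (S *v u) \<bullet> w" using ev(2)[OF l(1)] l(3) by simp
    also have "\<dots> = w \<bullet> (S *v u)" by (rule inner_commute)
    also have "\<dots> = u \<bullet> (S *v w)" by (rule symmetric_matrix_inner_swap[OF sym])
    also have "\<dots> = l2 * (u \<bullet> w)" using ev(2)[OF l(2)] l(4) by simp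
    finally have "(l1 - l2) * (u \<bullet> w) = 0" by (simp add: algebra_simps)
    then show "orthogonal u w" using l(5) by (simp add: orthogonal_def)
  qed
  show ?thesis
    using finite_imageD[OF pairwise_orthogonal_imp_finite[OF orth] inj] by (simp add: E_def)
qed

text \<open>A minimiser of the Rayleigh quotient is an eigenvector: perturbing it along
  the residual r = S v0 - q v0 keeps the quotient \<ge> q only if r = 0.\<close>
lemma Rayleigh_minimiser_eigenvector:
  fixes S :: "real^'n^'n"
  assumes sym: "transpose S = S" and "v0 \<bullet> v0 = 1"
    and min: "\<forall>v. (v0 \<bullet> (S *v v0)) * (v \<bullet> v) \<le> v \<bullet> (S *v v)"
  shows "S *v v0 = (v0 \<bullet> (S *v v0)) *\<^sub>R v0"
proof -
  define q where "q = v0 \<bullet> (S *v v0)"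
  define r where "r = S *v v0 - q *\<^sub>R v0"
  have "r \<bullet> v0 = 0"
    using \<open>v0 \<bullet> v0 = 1\<close> by (simp add: r_def q_def inner_diff_left inner_diff_right inner_commute)
  have "\<forall>s. 0 \<le> 0 + 2 * s * (r \<bullet> r) + s^2 * (r \<bullet> (S *v r) - q * (r \<bullet> r))"
  proof
    fix s
    have "(v0 + s *\<^sub>R r) \<bullet> (v0 + s *\<^sub>R r) = 1 + s^2 * (r \<bullet> r)"
      using \<open>v0 \<bullet> v0 = 1\<close> \<open>r \<bullet> v0 = 0\<close>
      by (simp add: inner_add_left inner_add_right inner_commute[of v0 r] power2_eq_square)
    then have "q * (1 + s^2 * (r \<bullet> r)) \<le> (v0 + s *\<^sub>R r) \<bullet> (S *v (v0 + s *\<^sub>R r))"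
      using min q_def by metis
    also have "\<dots> = q + 2 * s * (v0 \<bullet> (S *v r)) + s^2 * (r \<bullet> (S *v r))"
      using symmetric_matrix_quadratic_form_add[OF sym] q_def by simp
    also have "v0 \<bullet> (S *v r) = r \<bullet> (S *v v0)" by (rule symmetric_matrix_inner_swap[OF sym])
    also have "r \<bullet> (S *v v0) = r \<bullet> r"
      using \<open>r \<bullet> v0 = 0\<close> by (simp add: r_def inner_diff_right)
    finally show "0 \<le> 0 + 2 * s * (r \<bullet> r) + s^2 * (r \<bullet> (S *v r) - q * (r \<bullet> r))"
      by (simp add: algebra_simps)
  qed
  then have "(r \<bullet> r)^2 \<le> 0" by (metis quadratic_nonneg_imp_discriminant_le mult_zero_left)
  then show ?thesis by (simp add: r_def q_def)
qed

lemma lambda_min_Rayleigh: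
  fixes S :: "real^'n^'n"
  assumes sym: "transpose S = S"
  obtains v0 where "norm v0 = 1" "lambda_min S = v0 \<bullet> (S *v v0)"
    "\<And>v. lambda_min S * (v \<bullet> v) \<le> v \<bullet> (S *v v)"
proof -
  have "axis undefined 1 \<in> sphere (0::real^'n) 1" by simp
  then have "sphere (0::real^'n) 1 \<noteq> {}" by blast
  moreover have "continuous_on (sphere 0 1) (\<lambda>v::real^'n. v \<bullet> (S *v v))"
    by (intro continuous_intros matrix_vector_mult_linear_continuous_on)
  ultimately obtain v0 where "v0 \<in> sphere 0 1"
    and min_sphere: "\<forall>u\<in>sphere 0 1. v0 \<bullet> (S *v v0) \<le> u \<bullet> (S *v u)"
    using continuous_attains_inf[OF compact_sphere] by blast
  then have v0: "norm v0 = 1" by simp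
  define q where "q = v0 \<bullet> (S *v v0)"
  have Rayleigh: "q * (v \<bullet> v) \<le> v \<bullet> (S *v v)" for v
  proof (cases "v = 0")
    case False
    then have "(1 / norm v) *\<^sub>R v \<in> sphere 0 1" by simp
    then have "q \<le> ((1 / norm v) *\<^sub>R v) \<bullet> (S *v ((1 / norm v) *\<^sub>R v))"
      using min_sphere q_def by blast
    also have "\<dots> = (v \<bullet> (S *v v)) / (norm v)^2"
      by (simp add: matrix_vector_mult_scaleR power2_eq_square)
    finally show ?thesis using False by (simp add: field_simps dot_square_norm)
  qed simp
  define E where "E = {l. \<exists>v. v \<noteq> 0 \<and> S *v v = l *\<^sub>R v}"
  have "S *v v0 = q *\<^sub>R v0"
    using Rayleigh_minimiser_eigenvector[OF sym] v0 Rayleigh by (simp add: q_def dot_square_norm)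
  moreover have "v0 \<noteq> 0" using v0 by auto
  ultimately have "q \<in> E" unfolding E_def by blast
  moreover have "q \<le> l" if "l \<in> E" for l
  proof -
    obtain w where "w \<noteq> 0" "S *v w = l *\<^sub>R w" using \<open>l \<in> E\<close> unfolding E_def by blast
    then have "q * (w \<bullet> w) \<le> l * (w \<bullet> w)" using Rayleigh[of w] by simp
    then show ?thesis using \<open>w \<noteq> 0\<close> by (simp add: mult_le_cancel_right)
  qed
  moreover have "finite E" unfolding E_def by (rule symmetric_matrix_eigenvalues_finite[OF sym])
  ultimately have "Min E = q" by (intro Min_eqI)
  then have "lambda_min S = q" by (simp add: lambda_min_def E_def)
  then show thesis using that v0 Rayleigh q_def by simp
qed


lemma lambda_min_le_Rayleigh:
  fixes S :: "real^'n^'n"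
  assumes "transpose S = S"
  shows "lambda_min S * (v \<bullet> v) \<le> v \<bullet> (S *v v)"
  by (rule lambda_min_Rayleigh[OF assms]) blast

lemma lambda_min_pos:
  fixes S :: "real^'n^'n"
  assumes "transpose S = S" and "\<And>v. v \<noteq> 0 \<Longrightarrow> 0 < v \<bullet> (S *v v)"
  shows "0 < lambda_min S"
proof -
  obtain v0 where "norm v0 = 1" "lambda_min S = v0 \<bullet> (S *v v0)"
    using lambda_min_Rayleigh[OF assms(1)] by blast
  moreover have "v0 \<noteq> 0" using \<open>norm v0 = 1\<close> by auto
  ultimately show ?thesis using assms(2)[of v0] by simp
qed

section \<open>Matrix powers and inverses\<close>

fun matpow :: "'a::semiring_1^'n^'n \<Rightarrow> nat \<Rightarrow> 'a^'n^'n" where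
  "matpow B 0 = mat 1"
| "matpow B (Suc n) = matpow B n ** B"

lemma matpow_Suc_mult_vector:
  fixes B :: "'a::comm_semiring_1^'n^'n"
  shows "matpow B (Suc n) *v v = matpow B n *v (B *v v)"
  by (simp add: matrix_vector_mul_assoc)

lemma sum_matrix_vector_mult:
  fixes f :: "'i \<Rightarrow> 'a::comm_semiring_1^'n^'m"
  shows "(\<Sum>i\<in>I. f i) *v v = (\<Sum>i\<in>I. f i *v v)"
  by (induction I rule: infinite_finite_induct) (simp_all add: matrix_vector_mult_add_rdistrib)

text \<open>With B = I - S/2 we have S = 2(I - B), so the sum telescopes.\<close>
lemma Neumann_sum_telescope:
  fixes S :: "real^'n^'n"
  shows "((1/2) *\<^sub>R (mat 1 + (\<Sum>n\<in>{1..M}. matpow (mat 1 - (1/2) *\<^sub>R S) n))) *v (S *v v)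
    = v - matpow (mat 1 - (1/2) *\<^sub>R S) (Suc M) *v v"
proof -
  define B where "B = mat 1 - (1/2) *\<^sub>R S"
  define u where "u n = matpow B n *v v" for n
  have "S = 2 *\<^sub>R (mat 1 - B)" by (simp add: B_def scaleR_diff_right)
  then have "S *v v = 2 *\<^sub>R (v - B *v v)"
    by (simp add: scaleR_matrix_vector_assoc[symmetric] matrix_vector_mult_diff_rdistrib)
  then have "((1/2) *\<^sub>R (mat 1 + (\<Sum>n\<in>{1..M}. matpow B n))) *v (S *v v)
      = (v - B *v v) + (\<Sum>n\<in>{1..M}. matpow B n *v (v - B *v v))"
    by (simp add: scaleR_matrix_vector_assoc[symmetric] matrix_scaleR_vector_ac
        matrix_vector_mult_add_rdistrib sum_matrix_vector_mult)
  also have "\<dots> = (\<Sum>n<Suc M. u n - u (Suc n))"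
  proof -
    have "{..<Suc M} = insert 0 {1..M}" by auto
    then show ?thesis
      by (simp add: u_def matrix_vector_mult_diff_distrib matpow_Suc_mult_vector del: matpow.simps(2))
  qed
  also have "\<dots> = v - matpow B (Suc M) *v v"
    by (simp only: sum_lessThan_telescope') (simp add: u_def)
  finally show ?thesis by (simp add: B_def)
qed

lemma matrix_inv_mult_cancel:
  fixes A :: "real^'n^'n"
  assumes "\<forall>v. A *v v = 0 \<longrightarrow> v = 0"
  shows "matrix_inv A *v (A *v u) = u"
proof -
  have "invertible A"
    using assms matrix_left_invertible_ker invertible_left_inverse by blast
  then have "A ** matrix_inv A = mat 1 \<and> matrix_inv A ** A = mat 1"
    unfolding invertible_def matrix_inv_def by (rule someI_ex)
  then show ?thesis by (simp add: matrix_vector_mul_assoc)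
qed

section \<open>Actions and the entropy-regularised leader\<close>

definition xlnx :: "real \<Rightarrow> real" where
  "xlnx s = (if s = 0 then 0 else s * ln s)"

lemma continuous_on_xlnx: "continuous_on {0..} xlnx"
proof (rule continuous_on_eq_continuous_within[THEN iffD2], intro ballI)
  fix x :: real assume "x \<in> {0..}"
  show "continuous (at x within {0..}) xlnx"
  proof (cases "x = 0")
    case True
    have "((\<lambda>x::real. x * ln x) \<longlongrightarrow> 0) (at_right 0)" by real_asymp
    then have "(xlnx \<longlongrightarrow> 0) (at_right 0)"
      by (rule Lim_transform_eventually)
        (auto simp: xlnx_def intro: eventually_mono[OF eventually_at_right_less])
    then show ?thesis using True by (simp add: continuous_within xlnx_def at_within_Ici_at_right)
  next
    case False
    with \<open>x \<in> {0..}\<close> have "x > 0" by simp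
    have "\<forall>\<^sub>F s in nhds x. s * ln s = xlnx s"
      using eventually_nhds_in_open[of "{0<..}" x] \<open>x > 0\<close>
      by (auto simp: xlnx_def elim!: eventually_mono)
    moreover have "isCont (\<lambda>s. s * ln s) x" using \<open>x > 0\<close> by (intro continuous_intros) auto
    ultimately have "isCont xlnx x" using isCont_cong[of "\<lambda>s. s * ln s" xlnx x] by simp
    then show ?thesis using continuous_at_imp_continuous_at_within by blast
  qed
qed

lemma xlnx_scale_le:
  assumes "0 \<le> y" "0 < e" "e \<le> 1"
  shows "xlnx ((1 - e) * y) \<le> (1 - e) * xlnx y"
proof (cases "y = 0 \<or> e = 1")
  case False
  with assms have "y > 0" "1 - e > 0" by auto
  then have "ln ((1 - e) * y) \<le> ln y" using \<open>0 < e\<close> by (simp add: ln_mult)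
  then have "((1 - e) * y) * ln ((1 - e) * y) \<le> ((1 - e) * y) * ln y"
    using \<open>y > 0\<close> \<open>1 - e > 0\<close> by (intro mult_left_mono) auto
  then show ?thesis using \<open>y > 0\<close> \<open>1 - e > 0\<close> by (simp add: xlnx_def)
qed (auto simp: xlnx_def)


lemma finite_actions: "finite (actions m :: (real^'k) set)"
proof -
  have "vec_nth ` {A::real^'k. \<forall>k. A$k \<in> {0,1}} \<subseteq> PiE UNIV (\<lambda>_. {0,1})"
    by (auto simp: PiE_def)
  then have "finite (vec_nth ` {A::real^'k. \<forall>k. A$k \<in> {0,1}})"
    by (rule finite_subset) (intro finite_PiE, auto)
  then have "finite {A::real^'k. \<forall>k. A$k \<in> {0,1}}"
    by (rule finite_imageD) (auto intro: inj_onI simp: vec_eq_iff)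
  then show ?thesis by (rule finite_subset[rotated]) (auto simp: actions_def)
qed

lemma actions_component: "A \<in> actions m \<Longrightarrow> A$k = 0 \<or> A$k = 1"
  by (auto simp: actions_def)

lemma zero_in_actions: "0 \<in> actions m"
  by (auto simp: actions_def)

lemma axis_in_actions: "1 \<le> m \<Longrightarrow> axis k 1 \<in> actions m"
  by (auto simp: actions_def axis_def)

lemma convex_hull_actions_nonneg:
  fixes a :: "real^'k"
  assumes "a \<in> convex hull (actions m)"
  shows "0 \<le> a$k"
proof -
  have "convex hull (actions m) \<subseteq> {a::real^'k. 0 \<le> a$k}"
    by (intro hull_minimal) (auto simp: actions_def convex_def dest: spec[of _ k])
  with assms show ?thesis by auto
qed

lemma sum_basis_actions:
  assumes "1 \<le> m"
  shows "(\<Sum>a\<in>actions m. if a \<in> basis_actions then f a else 0) = (\<Sum>k\<in>UNIV. f (axis k 1 :: real^'k))"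
proof -
  have "basis_actions \<subseteq> (actions m :: (real^'k) set)"
    using axis_in_actions[OF assms] by (auto simp: basis_actions_def)
  then have "(\<Sum>a\<in>actions m. if a \<in> basis_actions then f a else 0) = (\<Sum>a\<in>basis_actions. f a)"
    by (simp add: sum.inter_restrict[OF finite_actions, symmetric] Int_absorb1)
  also have "\<dots> = (\<Sum>k\<in>UNIV. f (axis k 1 :: real^'k))"
  proof -
    have "inj (\<lambda>k. axis k 1 :: real^'k)" by (simp add: inj_on_def axis_eq_axis)
    moreover have "basis_actions = range (\<lambda>k. axis k 1 :: real^'k)"
      by (auto simp: basis_actions_def)
    ultimately show ?thesis using sum.reindex[of "\<lambda>k. axis k 1 :: real^'k" UNIV f] by simp
  qed
  finally show ?thesis .
qed

lemma ent_eq_sum_xlnx: "ent a = - (\<Sum>k\<in>UNIV. xlnx (a$k))"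
  by (simp add: ent_def xlnx_def)

lemma reg_obj_eq:
  "reg_obj th t eta x a
    = (\<Sum>k\<in>UNIV. (\<Sum>s\<in>{1..<t}. x \<bullet> th s k) * a$k) + (\<Sum>k\<in>UNIV. xlnx (a$k)) / eta"
  unfolding reg_obj_def ent_eq_sum_xlnx by (simp add: sum_distrib_right, rule sum.swap)

lemma abar_minimises:
  fixes m :: nat and th :: "nat \<Rightarrow> 'k::finite \<Rightarrow> real^'d"
  defines "H \<equiv> convex hull (actions m :: (real^'k) set)"
  shows "abar m th t eta y \<in> H"
    and "\<And>b. b \<in> H \<Longrightarrow> reg_obj th t eta y (abar m th t eta y) \<le> reg_obj th t eta y b"
proof -
  have "compact H" unfolding H_def
    by (intro compact_convex_hull finite_imp_compact finite_actions)
  moreover have "H \<noteq> {}" using zero_in_actions hull_inc unfolding H_def by fastforce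
  moreover have "continuous_on H (\<lambda>a::real^'k. xlnx (a$k))" for k
    by (rule continuous_on_compose2[OF continuous_on_xlnx])
      (auto intro!: continuous_intros simp: H_def convex_hull_actions_nonneg)
  then have "continuous_on H (reg_obj th t eta y)"
    unfolding reg_obj_eq divide_inverse by (intro continuous_intros)
  ultimately have "\<exists>a\<in>H. \<forall>b\<in>H. reg_obj th t eta y a \<le> reg_obj th t eta y b"
    by (intro continuous_attains_inf)
  from someI_ex[OF this[unfolded Bex_def]]
  show "abar m th t eta y \<in> H"
    and "\<And>b. b \<in> H \<Longrightarrow> reg_obj th t eta y (abar m th t eta y) \<le> reg_obj th t eta y b"
    unfolding abar_def H_def by blast+
qed

lemma sum_xlnx_shift_to_axis_le:
  assumes "\<forall>j. 0 \<le> a$j" "a$k = 0" "0 < e" "e \<le> 1"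
  shows "(\<Sum>j\<in>UNIV. xlnx (((1 - e) *\<^sub>R a + e *\<^sub>R axis k 1)$j))
    \<le> e * ln e + (1 - e) * (\<Sum>j\<in>UNIV. xlnx (a$j))"
proof -
  have "xlnx (((1 - e) *\<^sub>R a + e *\<^sub>R axis k 1)$j)
      \<le> (if j = k then e * ln e else 0) + (1 - e) * xlnx (a$j)" for j
    using assms xlnx_scale_le[of "a$j" e] by (cases "j = k") (auto simp: xlnx_def axis_def)
  then have "(\<Sum>j\<in>UNIV. xlnx (((1 - e) *\<^sub>R a + e *\<^sub>R axis k 1)$j))
      \<le> (\<Sum>j\<in>UNIV. (if j = k then e * ln e else 0) + (1 - e) * xlnx (a$j))"
    by (rule sum_mono)
  then show ?thesis by (simp add: sum.distrib sum_distrib_left)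
qed

text \<open>The entropy term has slope -\<infinity> at the boundary: moving mass e from abar
  towards the vertex axis k 1 changes the objective by e ln e / eta + O(e), which is
  negative for small e if the k-th coordinate of abar were 0.\<close>
lemma abar_component_pos:
  fixes th :: "nat \<Rightarrow> 'k::finite \<Rightarrow> real^'d"
  assumes "1 \<le> m" and "0 < eta"
  shows "0 < abar m th t eta y $ k"
proof (rule ccontr)
  define a where "a = abar m th t eta y"
  define c where "c j = (\<Sum>s\<in>{1..<t}. y \<bullet> th s j)" for j
  define L where "L b = (\<Sum>j\<in>UNIV. c j * b$j)" for b :: "real^'k"
  define F where "F = (\<Sum>j\<in>UNIV. xlnx (a$j))"
  have obj: "reg_obj th t eta y b = L b + (\<Sum>j\<in>UNIV. xlnx (b$j)) / eta" for b
    unfolding reg_obj_eq L_def c_def ..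
  have a_hull: "a \<in> convex hull actions m" unfolding a_def by (rule abar_minimises)
  assume "\<not> 0 < abar m th t eta y $ k"
  then have "a$k = 0" using convex_hull_actions_nonneg[OF a_hull, of k] by (simp add: a_def)
  define e where "e = min 1 (exp (F + eta * (L a - L (axis k 1))) / 2)"
  have "0 < e" "e \<le> 1" by (auto simp: e_def)
  have "ln e \<le> ln (exp (F + eta * (L a - L (axis k 1))) / 2)"
    using \<open>0 < e\<close> by (simp add: e_def)
  also have "\<dots> = F + eta * (L a - L (axis k 1)) - ln 2" by (simp add: ln_div)
  finally have "ln e < F + eta * (L a - L (axis k 1))"
    using ln_gt_zero[of "2::real"] by linarith
  then have gain: "(L (axis k 1) - L a) + (ln e - F) / eta < 0"
    using \<open>0 < eta\<close> by (simp add: field_simps)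
  define b where "b = (1 - e) *\<^sub>R a + e *\<^sub>R axis k 1"
  have "b \<in> convex hull actions m"
    using convexD[OF convex_convex_hull a_hull hull_inc[OF axis_in_actions[OF \<open>1 \<le> m\<close>]]]
      \<open>0 < e\<close> \<open>e \<le> 1\<close> by (simp add: b_def)
  have "L b = (\<Sum>j\<in>UNIV. (1 - e) * (c j * a$j) + e * (c j * axis k 1 $ j))"
    unfolding L_def b_def by (intro sum.cong) (auto simp: algebra_simps)
  then have "L b = (1 - e) * L a + e * L (axis k 1)"
    unfolding L_def by (simp add: sum.distrib sum_distrib_left)
  then have "reg_obj th t eta y b \<le> (1 - e) * L a + e * L (axis k 1) + (e * ln e + (1 - e) * F) / eta"
    unfolding obj F_def b_def
    using sum_xlnx_shift_to_axis_le[of a k e] convex_hull_actions_nonneg[OF a_hull]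
      \<open>a$k = 0\<close> \<open>0 < e\<close> \<open>e \<le> 1\<close> \<open>0 < eta\<close>
    by (simp add: divide_right_mono)
  also have "\<dots> = reg_obj th t eta y a + e * ((L (axis k 1) - L a) + (ln e - F) / eta)"
    unfolding obj F_def using \<open>0 < eta\<close> by (simp add: field_simps)
  also have "\<dots> < reg_obj th t eta y a"
    using gain \<open>0 < e\<close> by (simp add: mult_pos_neg)
  finally have "reg_obj th t eta y b < reg_obj th t eta y a" .
  moreover have "reg_obj th t eta y a \<le> reg_obj th t eta y b"
    unfolding a_def using \<open>b \<in> convex hull actions m\<close> by (rule abar_minimises(2))
  ultimately show False by simp
qed

section \<open>Joint law of a context and an action\<close>

locale context_policy =
  fixes D :: "'a measure" and A :: "'b set" and pol :: "'a \<Rightarrow> 'b \<Rightarrow> real"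
  assumes prob_space_D: "prob_space D" and finite_A: "finite A"
    and pol_nonneg: "\<And>x a. 0 \<le> pol x a"
    and pol_sum: "\<And>x. (\<Sum>a\<in>A. pol x a) = 1"
    and pol_measurable: "\<And>a. (\<lambda>x. pol x a) \<in> borel_measurable D"
begin

interpretation D: prob_space D by (rule prob_space_D)

interpretation DA: pair_sigma_finite D "count_space A"
  by (intro pair_sigma_finite.intro D.sigma_finite_measure_axioms
      finite_measure.sigma_finite_measure finite_measure_count_space finite_A)

definition joint :: "('a \<times> 'b) measure" where
  "joint = density (D \<Otimes>\<^sub>M count_space A) (\<lambda>(x, a). ennreal (pol x a))"

lemma pol_le_1: "a \<in> A \<Longrightarrow> pol x a \<le> 1"
  using member_le_sum[of a A "pol x"] pol_nonneg pol_sum finite_A by auto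

lemma measurable_pol_pair: "(\<lambda>z. pol (fst z) (snd z)) \<in> borel_measurable (D \<Otimes>\<^sub>M count_space A)"
proof -
  have "(\<lambda>z. pol (snd z) (fst z)) \<in> borel_measurable (count_space A \<Otimes>\<^sub>M D)"
    by (rule measurable_pair_measure_countable1) (simp_all add: countable_finite finite_A pol_measurable)
  from measurable_comp[OF measurable_pair_swap' this] show ?thesis
    by (simp add: comp_def case_prod_beta)
qed

lemma joint_density: "joint = density (D \<Otimes>\<^sub>M count_space A) (\<lambda>z. ennreal (pol (fst z) (snd z)))"
  unfolding joint_def by (simp add: case_prod_beta')

lemma prob_space_joint: "prob_space joint"
proof
  have "emeasure joint (space joint) = (\<integral>\<^sup>+ z. ennreal (pol (fst z) (snd z)) \<partial>(D \<Otimes>\<^sub>M count_space A))"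
    unfolding joint_density using measurable_pol_pair by (simp add: emeasure_density)
  also have "\<dots> = (\<integral>\<^sup>+ x. (\<integral>\<^sup>+ a. ennreal (pol x a) \<partial>count_space A) \<partial>D)"
    using DA.M2.nn_integral_fst[of "\<lambda>z. ennreal (pol (fst z) (snd z))"] measurable_pol_pair by simp
  also have "\<dots> = (\<integral>\<^sup>+ x. 1 \<partial>D)"
    using finite_A
    by (intro nn_integral_cong) (simp add: nn_integral_count_space_finite sum_ennreal pol_nonneg pol_sum)
  finally show "emeasure joint (space joint) = 1" by (simp add: D.emeasure_space_1)
qed

lemma space_joint: "space joint = space D \<times> A"
  by (simp add: joint_def space_pair_measure)

lemma sets_joint: "sets joint = sets (D \<Otimes>\<^sub>M count_space A)"
  by (simp add: joint_def)

lemma AE_joint_fst: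
  assumes "AE x in D. P x" and "{x \<in> space D. P x} \<in> sets D"
  shows "AE z in joint. P (fst z)"
proof -
  have "AE z in D \<Otimes>\<^sub>M count_space A. P (fst z)"
  proof (rule DA.AE_pair_measure)
    have "{z \<in> space (D \<Otimes>\<^sub>M count_space A). P (fst z)} = {x \<in> space D. P x} \<times> A"
      by (auto simp: space_pair_measure)
    then show "{z \<in> space (D \<Otimes>\<^sub>M count_space A). P (fst z)} \<in> sets (D \<Otimes>\<^sub>M count_space A)"
      using assms(2) by simp
    show "AE x in D. AE y in count_space A. P (fst (x, y))"
      using assms(1) by eventually_elim simp
  qed
  then show ?thesis
    unfolding joint_density using measurable_pol_pair by (subst AE_density) (auto elim: AE_mp)
qed

lemma integrable_integral_joint:
  fixes f :: "'a \<times> 'b \<Rightarrow> real"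
  assumes f_measurable: "f \<in> borel_measurable (D \<Otimes>\<^sub>M count_space A)"
    and bounded: "AE x in D. \<forall>a\<in>A. \<bar>f (x, a)\<bar> \<le> B"
  shows "integrable joint f" "integral\<^sup>L joint f = (\<integral>x. (\<Sum>a\<in>A. pol x a * f (x, a)) \<partial>D)"
proof -
  interpret DA_fin: finite_measure "D \<Otimes>\<^sub>M count_space A"
    by (intro finite_measure_pair_measure finite_measure_count_space finite_A)
      (rule D.finite_measure_axioms)
  let ?g = "\<lambda>z. pol (fst z) (snd z)"
  have "AE z in D \<Otimes>\<^sub>M count_space A. norm (?g z *\<^sub>R f z) \<le> B"
  proof (rule DA.AE_pair_measure)
    show "{z \<in> space (D \<Otimes>\<^sub>M count_space A). norm (?g z *\<^sub>R f z) \<le> B} \<in> sets (D \<Otimes>\<^sub>M count_space A)"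
      using measurable_pol_pair f_measurable by measurable
    have pointwise: "\<bar>pol x a * f (x, a)\<bar> \<le> B" if "a \<in> A" "\<bar>f (x, a)\<bar> \<le> B" for x a
      using that pol_le_1[of a x] pol_nonneg[of x a]
      by (simp add: abs_mult) (metis abs_ge_zero mult_left_le_one_le order_trans)
    from bounded show "AE x in D. AE a in count_space A. norm (?g (x, a) *\<^sub>R f (x, a)) \<le> B"
      by eventually_elim (auto intro!: AE_I2 pointwise)
  qed
  then have int: "integrable (D \<Otimes>\<^sub>M count_space A) (\<lambda>z. ?g z *\<^sub>R f z)"
    by (rule DA_fin.integrable_const_bound) (use measurable_pol_pair f_measurable in measurable)
  then show "integrable joint f"
    unfolding joint_density using integrable_density[OF f_measurable measurable_pol_pair] pol_nonneg
    by simp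
  have "integral\<^sup>L joint f = integral\<^sup>L (D \<Otimes>\<^sub>M count_space A) (\<lambda>z. ?g z *\<^sub>R f z)"
    unfolding joint_density using f_measurable measurable_pol_pair pol_nonneg
    by (subst integral_density) auto
  also have "\<dots> = (\<integral>x. (\<integral>a. ?g (x, a) *\<^sub>R f (x, a) \<partial>count_space A) \<partial>D)"
    by (rule DA.integral_fst'[OF int, symmetric])
  finally show "integral\<^sup>L joint f = (\<integral>x. (\<Sum>a\<in>A. pol x a * f (x, a)) \<partial>D)"
    using finite_A by (simp add: lebesgue_integral_count_space_finite)
qed

end

section \<open>Products of i.i.d. random contractions\<close>

fun prod_matrices :: "('a \<Rightarrow> real^'d^'d) \<Rightarrow> (nat \<Rightarrow> 'a) \<Rightarrow> nat \<Rightarrow> real^'d^'d" where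
  "prod_matrices G w 0 = mat 1"
| "prod_matrices G w (Suc n) = prod_matrices G w n ** G (w (Suc n))"

lemma prod_matrices_cong: "(\<And>l. l \<in> {1..n} \<Longrightarrow> w l = w' l) \<Longrightarrow> prod_matrices G w n = prod_matrices G w' n"
  by (induction n) auto

lemma prod_matrices_norm_le:
  assumes "\<And>l v. l \<in> {1..n} \<Longrightarrow> norm (G (w l) *v v) \<le> norm v"
  shows "norm (prod_matrices G w n *v v) \<le> norm v"
  using assms
proof (induction n arbitrary: v)
  case (Suc n)
  have "norm (prod_matrices G w (Suc n) *v v) = norm (prod_matrices G w n *v (G (w (Suc n)) *v v))"
    by (simp add: matrix_vector_mul_assoc)
  also have "\<dots> \<le> norm (G (w (Suc n)) *v v)" using Suc by auto
  also have "\<dots> \<le> norm v" using Suc.prems by auto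
  finally show ?case .
qed simp

lemma contraction_entry_abs_le_1:
  fixes C :: "real^'n^'m"
  assumes "\<forall>v. norm (C *v v) \<le> norm v"
  shows "\<bar>C $ i $ j\<bar> \<le> 1"
proof -
  have "C $ i $ j = (C *v axis j 1) $ i"
    by (simp add: matrix_vector_mult_def axis_def if_distrib cong: if_cong)
  then have "\<bar>C $ i $ j\<bar> \<le> norm (C *v axis j 1)" by (metis component_le_norm_cart)
  also have "\<dots> \<le> 1" using assms[rule_format, of "axis j 1"] by simp
  finally show ?thesis .
qed

locale iid_contractions =
  fixes Q :: "'a measure" and G :: "'a \<Rightarrow> real^'d^'d" and EG :: "real^'d^'d"
  assumes prob_space_Q: "prob_space Q"
    and G_measurable: "\<And>i j. (\<lambda>z. G z $ i $ j) \<in> borel_measurable Q"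
    and G_contraction: "AE z in Q. \<forall>v. norm (G z *v v) \<le> norm v"
    and G_expectation: "\<And>i j. (\<integral>z. G z $ i $ j \<partial>Q) = EG $ i $ j"
begin

interpretation Q: prob_space Q by (rule prob_space_Q)
interpretation QQ: product_prob_space "(\<lambda>_. Q) :: nat \<Rightarrow> _" by (intro product_prob_spaceI prob_space_Q)

lemma G_integrable: "integrable Q (\<lambda>z. G z $ i $ j)"
proof (rule Q.integrable_const_bound[where B=1])
  show "AE z in Q. norm (G z $ i $ j) \<le> 1"
    using G_contraction by eventually_elim (simp add: contraction_entry_abs_le_1)
qed (rule G_measurable)

lemma prob_space_PiM: "prob_space (PiM I (\<lambda>_. Q))"
  by (simp add: prob_space_PiM prob_space_Q)

lemma prod_matrices_measurable:
  assumes "{1..n} \<subseteq> I"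
  shows "(\<lambda>w. prod_matrices G w n $ i $ j) \<in> borel_measurable (PiM I (\<lambda>_. Q))"
  using assms
proof (induction n arbitrary: j)
  case (Suc n)
  have "Suc n \<in> I" "{1..n} \<subseteq> I" using Suc.prems by auto
  have "(\<lambda>w. G (w (Suc n)) $ l $ j) \<in> borel_measurable (PiM I (\<lambda>_. Q))" for l
    using measurable_comp[OF measurable_component_singleton[OF \<open>Suc n \<in> I\<close>] G_measurable]
    by (simp add: comp_def)
  with Suc.IH[OF \<open>{1..n} \<subseteq> I\<close>] show ?case by (simp add: matrix_matrix_mult_def)
qed simp

lemma integrable_prod_matrices:
  assumes "finite I" "{1..n} \<subseteq> I"
  shows "integrable (PiM I (\<lambda>_. Q)) (\<lambda>w. prod_matrices G w n $ i $ j)"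
proof -
  have "AE w in PiM I (\<lambda>_. Q). \<forall>l\<in>{1..n}. \<forall>v. norm (G (w l) *v v) \<le> norm v"
  proof (rule AE_finite_allI)
    fix l assume "l \<in> {1..n}"
    then show "AE w in PiM I (\<lambda>_. Q). \<forall>v. norm (G (w l) *v v) \<le> norm v"
      using AE_PiM_component[of I "\<lambda>_. Q" l "\<lambda>z. \<forall>v. norm (G z *v v) \<le> norm v"]
        assms prob_space_Q G_contraction by auto
  qed simp
  then have "AE w in PiM I (\<lambda>_. Q). \<bar>prod_matrices G w n $ i $ j\<bar> \<le> 1"
    by eventually_elim (intro contraction_entry_abs_le_1 allI prod_matrices_norm_le, auto)
  then show ?thesis
    using prod_matrices_measurable[OF assms(2)]
    by (intro finite_measure.integrable_const_bound[OF prob_space.finite_measure[OF prob_space_PiM]])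
      auto
qed

text \<open>Integrating out the last factor, which is independent of the others.\<close>
lemma integral_prod_matrices:
  assumes "finite I" "{1..n} \<subseteq> I"
  shows "(\<integral>w. prod_matrices G w n $ i $ j \<partial>PiM I (\<lambda>_. Q)) = matpow EG n $ i $ j"
  using assms
proof (induction n arbitrary: I j)
  case 0
  then show ?case using prob_space.prob_space[OF prob_space_PiM[of I]] by (simp add: mat_def)
next
  case (Suc n)
  define I' where "I' = I - {Suc n}"
  have I: "I = insert (Suc n) I'" "finite I'" "Suc n \<notin> I'" "{1..n} \<subseteq> I'"
    using Suc.prems by (auto simp: I'_def)
  have "(\<integral>w. prod_matrices G w (Suc n) $ i $ j \<partial>PiM I (\<lambda>_. Q))
      = (\<integral>x. (\<integral>y. prod_matrices G (x(Suc n := y)) (Suc n) $ i $ j \<partial>Q) \<partial>PiM I' (\<lambda>_. Q))"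
    unfolding I(1) using integrable_prod_matrices[OF Suc.prems]
    by (intro QQ.product_integral_insert[OF I(2,3)]) (simp add: I(1))
  also have "\<dots> = (\<integral>x. (\<Sum>l\<in>UNIV. prod_matrices G x n $ i $ l * EG $ l $ j) \<partial>PiM I' (\<lambda>_. Q))"
  proof -
    have "prod_matrices G (x(Suc n := y)) n = prod_matrices G x n" for x y
      by (rule prod_matrices_cong) auto
    then show ?thesis by (simp add: matrix_matrix_mult_def G_integrable G_expectation)
  qed
  also have "\<dots> = (\<Sum>l\<in>UNIV. matpow EG n $ i $ l * EG $ l $ j)"
    using integrable_prod_matrices[OF I(2,4)] Suc.IH[OF I(2,4)] by simp
  finally show ?case by (simp add: matrix_matrix_mult_def)
qed

end

section \<open>Bias of the matrix geometric resampling estimator\<close>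

lemma integrable_integral_pair_mult:
  fixes f :: "'a \<Rightarrow> real" and h :: "'b \<Rightarrow> real"
  assumes "sigma_finite_measure M1" "sigma_finite_measure M2"
    and f: "integrable M1 f" and h: "integrable M2 h"
  shows "integrable (M1 \<Otimes>\<^sub>M M2) (\<lambda>\<omega>. f (fst \<omega>) * h (snd \<omega>))"
    and "(\<integral>\<omega>. f (fst \<omega>) * h (snd \<omega>) \<partial>(M1 \<Otimes>\<^sub>M M2)) = integral\<^sup>L M1 f * integral\<^sup>L M2 h"
proof -
  interpret pair_sigma_finite M1 M2 by (intro pair_sigma_finite.intro assms(1,2))
  have [measurable]: "f \<in> borel_measurable M1" "h \<in> borel_measurable M2" using f h by auto
  show int: "integrable (M1 \<Otimes>\<^sub>M M2) (\<lambda>\<omega>. f (fst \<omega>) * h (snd \<omega>))"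
  proof (rule Fubini_integrable)
    have "integrable M1 (\<lambda>x. \<bar>f x\<bar> * (\<integral>y. \<bar>h y\<bar> \<partial>M2))"
      using f by (intro integrable_mult_left) auto
    then show "integrable M1 (\<lambda>x. \<integral>y. norm (f (fst (x, y)) * h (snd (x, y))) \<partial>M2)"
      by (simp add: abs_mult)
  qed (use h in auto)
  show "(\<integral>\<omega>. f (fst \<omega>) * h (snd \<omega>) \<partial>(M1 \<Otimes>\<^sub>M M2)) = integral\<^sup>L M1 f * integral\<^sup>L M2 h"
    using integral_fst'[OF int] by simp
qed

lemma integrable_integral_pair_bilinear:
  fixes g :: "'a \<Rightarrow> real^'n" and S :: "'b \<Rightarrow> real^'n^'m"
  assumes M1: "prob_space M1" and M2: "prob_space M2"
    and g: "\<And>j. integrable M1 (\<lambda>z. g z $ j)" "\<And>j. (\<integral>z. g z $ j \<partial>M1) = Eg $ j"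
    and S: "\<And>i j. integrable M2 (\<lambda>w. S w $ i $ j)" "\<And>i j. (\<integral>w. S w $ i $ j \<partial>M2) = ES $ i $ j"
  shows "integrable (M1 \<Otimes>\<^sub>M M2) (\<lambda>\<omega>. x \<bullet> (S (snd \<omega>) *v g (fst \<omega>)))"
    and "(\<integral>\<omega>. x \<bullet> (S (snd \<omega>) *v g (fst \<omega>)) \<partial>(M1 \<Otimes>\<^sub>M M2)) = x \<bullet> (ES *v Eg)"
proof -
  have sf: "sigma_finite_measure M1" "sigma_finite_measure M2"
    using M1 M2 by (simp_all add: prob_space_imp_sigma_finite)
  have expand: "x \<bullet> (S' *v v) = (\<Sum>i\<in>UNIV. \<Sum>j\<in>UNIV. (x$i * v$j) * S' $ i $ j)" for S' :: "real^'n^'m" and v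
    by (simp add: inner_vec_def matrix_vector_mult_def sum_distrib_left algebra_simps)
  have xg: "integrable M1 (\<lambda>z. x$i * g z $ j)" for i j using g by simp
  note prod_term = integrable_integral_pair_mult[OF sf xg S(1)]
  show "integrable (M1 \<Otimes>\<^sub>M M2) (\<lambda>\<omega>. x \<bullet> (S (snd \<omega>) *v g (fst \<omega>)))"
    unfolding expand by (intro Bochner_Integration.integrable_sum) (rule prod_term(1))
  show "(\<integral>\<omega>. x \<bullet> (S (snd \<omega>) *v g (fst \<omega>)) \<partial>(M1 \<Otimes>\<^sub>M M2)) = x \<bullet> (ES *v Eg)"
    unfolding expand using prod_term g(2) S(2)
    by (simp add: Bochner_Integration.integral_sum Bochner_Integration.integrable_sum)
qed

lemma inner_square_le:
  fixes v x :: "'a::real_inner"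
  assumes "norm x \<le> 1"
  shows "(v \<bullet> x)^2 \<le> v \<bullet> v"
proof -
  have "(v \<bullet> x)^2 \<le> (v \<bullet> v) * (x \<bullet> x)" by (rule Cauchy_Schwarz_ineq)
  also have "\<dots> \<le> v \<bullet> v"
    using assms by (intro mult_left_le) (simp_all add: dot_square_norm power_le_one)
  finally show ?thesis .
qed

lemma outer_mult_vector: "outer x *v v = (x \<bullet> v) *\<^sub>R x"
  by (simp add: vec_eq_iff outer_def matrix_vector_mult_def inner_vec_def sum_distrib_left algebra_simps)

lemma sample_moment_bound:
  assumes "norm x \<le> 1" and "a \<in> actions m"
  shows "\<bar>a$k * x$i * x$j\<bar> \<le> 1"
proof -
  have "\<bar>x$i\<bar> \<le> 1" "\<bar>x$j\<bar> \<le> 1" using assms(1) by (meson component_le_norm_cart order_trans)+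
  moreover have "\<bar>a$k\<bar> \<le> 1" using actions_component[OF assms(2), of k] by auto
  ultimately show ?thesis by (simp add: abs_mult mult_le_one)
qed

definition step_matrix :: "'k::finite \<Rightarrow> (real^'d) \<times> (real^'k) \<Rightarrow> real^'d^'d" where
  "step_matrix k z = mat 1 - ((snd z)$k / 2) *\<^sub>R outer (fst z)"

lemma Cmat_eq_prod_matrices: "Cmat k w n = prod_matrices (step_matrix k) w n"
  by (induction n) (simp_all add: step_matrix_def)

lemma step_matrix_entry: "step_matrix k z $ i $ j = mat 1 $ i $ j - (snd z)$k / 2 * ((fst z)$i * (fst z)$j)"
  by (simp add: step_matrix_def outer_def)

lemma step_matrix_contraction:
  assumes "norm (fst z) \<le> 1" and "(snd z)$k = 0 \<or> (snd z)$k = 1"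
  shows "norm (step_matrix k z *v v) \<le> norm v"
proof -
  have quadratic: "u \<bullet> (step_matrix k z *v u) = u \<bullet> u - (snd z)$k / 2 * (u \<bullet> fst z)^2" for u
    by (simp add: step_matrix_def matrix_vector_mult_diff_rdistrib outer_mult_vector
        scaleR_matrix_vector_assoc[symmetric] inner_diff_right power2_eq_square inner_commute)
  have "0 \<le> u \<bullet> (step_matrix k z *v u) \<and> u \<bullet> (step_matrix k z *v u) \<le> 1 * (u \<bullet> u)" for u
    unfolding quadratic using assms(2) inner_square_le[OF assms(1), of u]
    by (auto intro: order_trans[of _ "u \<bullet> u"])
  then show ?thesis
    using psd_matrix_norm_le[of "step_matrix k z" 1]
    by (simp add: vec_eq_iff transpose_def step_matrix_def outer_def mat_def mult.commute)
qed

locale exploring_policy = context_policy D "actions m" pol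
  for D :: "(real^'d) measure" and m :: nat and pol :: "real^'d \<Rightarrow> real^'k::finite \<Rightarrow> real" +
  fixes g0 lam :: real
  assumes sets_D: "sets D = sets borel"
    and D_unit_ball: "AE x in D. norm x \<le> 1"
    and play_prob_pos: "\<And>x k. 0 < (\<Sum>a\<in>actions m. pol x a * a$k)"
    and play_prob_ge: "\<And>x k. g0 \<le> (\<Sum>a\<in>actions m. pol x a * a$k)"
    and g0_nonneg: "0 \<le> g0"
    and lam_Rayleigh: "\<And>v. lam * (v \<bullet> v) \<le> v \<bullet> (second_moment D *v v)"
    and second_moment_pos: "\<And>v. v \<noteq> 0 \<Longrightarrow> 0 < v \<bullet> (second_moment D *v v)"
begin

interpretation D: prob_space D by (rule prob_space_D)
interpretation joint: prob_space joint by (rule prob_space_joint)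

definition play_prob :: "'k \<Rightarrow> real^'d \<Rightarrow> real" where
  "play_prob k x = (\<Sum>a\<in>actions m. pol x a * a$k)"

lemma play_prob_le_1: "play_prob k x \<le> 1"
proof -
  have "pol x a * a$k \<le> pol x a" if "a \<in> actions m" for a
    using actions_component[OF that, of k] pol_nonneg[of x a] by auto
  then have "play_prob k x \<le> (\<Sum>a\<in>actions m. pol x a)"
    unfolding play_prob_def by (rule sum_mono)
  then show ?thesis by (simp add: pol_sum)
qed

lemma play_prob_measurable: "play_prob k \<in> borel_measurable borel"
proof -
  have "(\<lambda>x. pol x a) \<in> borel_measurable borel" for a
    using pol_measurable measurable_cong_sets[OF sets_D refl] by blast
  then show ?thesis unfolding play_prob_def by measurable
qed

lemma measurable_D: "f \<in> borel_measurable borel \<Longrightarrow> f \<in> borel_measurable D"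
  using measurable_cong_sets[OF sets_D refl] by blast

lemma measurable_joint:
  fixes f :: "(real^'d) \<times> (real^'k) \<Rightarrow> real"
  assumes "\<And>a. (\<lambda>x. f (x, a)) \<in> borel_measurable borel"
  shows "f \<in> borel_measurable (D \<Otimes>\<^sub>M count_space (actions m))" "f \<in> borel_measurable joint"
proof -
  have "(\<lambda>z. f (snd z, fst z)) \<in> borel_measurable (count_space (actions m) \<Otimes>\<^sub>M D)"
    using assms by (intro measurable_pair_measure_countable1 countable_finite finite_actions measurable_D) simp
  from measurable_comp[OF measurable_pair_swap' this]
  show "f \<in> borel_measurable (D \<Otimes>\<^sub>M count_space (actions m))" by (simp add: comp_def case_prod_beta)
  then show "f \<in> borel_measurable joint" using measurable_cong_sets[OF sets_joint refl] by blast
qed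

lemma AE_joint_unit_ball: "AE z in joint. norm (fst z) \<le> 1"
proof (rule AE_joint_fst[OF D_unit_ball])
  have "(\<lambda>x::real^'d. norm x) \<in> borel_measurable D" by (rule measurable_D) simp
  then show "{x \<in> space D. norm x \<le> 1} \<in> sets D" by measurable
qed

lemma integrable_D_bounded:
  fixes f :: "real^'d \<Rightarrow> real"
  assumes "f \<in> borel_measurable borel" and "\<And>x. norm x \<le> 1 \<Longrightarrow> \<bar>f x\<bar> \<le> B"
  shows "integrable D f"
  using D_unit_ball assms
  by (intro D.integrable_const_bound[where B=B] measurable_D) (auto elim!: AE_mp)

lemma integrable_integral_joint_bounded:
  fixes f :: "(real^'d) \<times> (real^'k) \<Rightarrow> real"
  assumes "\<And>a. (\<lambda>x. f (x, a)) \<in> borel_measurable borel"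
    and "\<And>x a. norm x \<le> 1 \<Longrightarrow> a \<in> actions m \<Longrightarrow> \<bar>f (x, a)\<bar> \<le> B"
  shows "integrable joint f" "integral\<^sup>L joint f = (\<integral>x. (\<Sum>a\<in>actions m. pol x a * f (x, a)) \<partial>D)"
proof -
  have "AE x in D. \<forall>a\<in>actions m. \<bar>f (x, a)\<bar> \<le> B"
    using D_unit_ball by eventually_elim (simp add: assms(2))
  then show "integrable joint f" "integral\<^sup>L joint f = (\<integral>x. (\<Sum>a\<in>actions m. pol x a * f (x, a)) \<partial>D)"
    using integrable_integral_joint[OF measurable_joint(1)[OF assms(1)]] by auto
qed

lemma weighted_moment_quadratic_form:
  fixes h :: "real^'d \<Rightarrow> real" and S :: "real^'d^'d"
  assumes h: "h \<in> borel_measurable borel" "\<And>x. \<bar>h x\<bar> \<le> 1"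
    and S: "\<And>i j. S$i$j = (\<integral>x. h x * (x$i * x$j) \<partial>D)"
  shows "v \<bullet> (S *v v) = (\<integral>x. h x * (v \<bullet> x)^2 \<partial>D)"
proof -
  have int: "integrable D (\<lambda>x. h x * (x$i * x$j))" for i j
  proof (rule integrable_D_bounded[where B=1])
    fix x :: "real^'d" assume "norm x \<le> 1"
    then have "\<bar>x$i\<bar> \<le> 1" "\<bar>x$j\<bar> \<le> 1" by (meson component_le_norm_cart order_trans)+
    then show "\<bar>h x * (x$i * x$j)\<bar> \<le> 1" using h(2)[of x] by (simp add: abs_mult mult_le_one)
  qed (use h(1) in measurable)
  have "v \<bullet> (S *v v) = (\<Sum>i\<in>UNIV. \<Sum>j\<in>UNIV. v$i * v$j * S$i$j)"
    by (simp add: inner_vec_def matrix_vector_mult_def sum_distrib_left algebra_simps)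
  also have "\<dots> = (\<Sum>i\<in>UNIV. \<Sum>j\<in>UNIV. (\<integral>x. v$i * v$j * (h x * (x$i * x$j)) \<partial>D))"
    by (simp add: S)
  also have "\<dots> = (\<integral>x. (\<Sum>i\<in>UNIV. \<Sum>j\<in>UNIV. v$i * v$j * (h x * (x$i * x$j))) \<partial>D)"
    using int by (simp add: Bochner_Integration.integral_sum Bochner_Integration.integrable_sum)
  also have "\<dots> = (\<integral>x. h x * (v \<bullet> x)^2 \<partial>D)"
    by (simp add: inner_vec_def power2_eq_square sum_product sum_distrib_left algebra_simps)
  finally show ?thesis .
qed

lemma second_moment_quadratic_form: "v \<bullet> (second_moment D *v v) = (\<integral>x. (v \<bullet> x)^2 \<partial>D)"
  using weighted_moment_quadratic_form[of "\<lambda>_. 1" "second_moment D" v] by (simp add: second_moment_def)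

lemma integrable_sample_moment: "integrable joint (\<lambda>z. (snd z)$k * (fst z)$i * (fst z)$j)"
  by (rule integrable_integral_joint_bounded(1)[where B=1]) (auto simp: sample_moment_bound)

lemma Sigma_tk_entry: "Sigma_tk joint k $ i $ j = (\<integral>x. play_prob k x * (x$i * x$j) \<partial>D)"
proof -
  have "Sigma_tk joint k $ i $ j = (\<integral>z. (snd z)$k * (fst z)$i * (fst z)$j \<partial>joint)"
    by (simp add: Sigma_tk_def)
  also have "\<dots> = (\<integral>x. (\<Sum>a\<in>actions m. pol x a * (a$k * x$i * x$j)) \<partial>D)"
    using integrable_integral_joint_bounded(2)[of "\<lambda>z. (snd z)$k * (fst z)$i * (fst z)$j" 1]
    by (simp add: sample_moment_bound)
  finally show ?thesis
    by (simp add: play_prob_def sum_distrib_right sum_distrib_left algebra_simps)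
qed

lemma Sigma_tk_quadratic_form: "v \<bullet> (Sigma_tk joint k *v v) = (\<integral>x. play_prob k x * (v \<bullet> x)^2 \<partial>D)"
  using play_prob_pos play_prob_le_1
  by (intro weighted_moment_quadratic_form[OF play_prob_measurable _ Sigma_tk_entry])
    (simp add: play_prob_def abs_le_iff less_imp_le)

lemma integrable_weighted_square:
  assumes "h \<in> borel_measurable borel" "\<And>x. \<bar>h x\<bar> \<le> 1"
  shows "integrable D (\<lambda>x. h x * (v \<bullet> x)^2)"
proof (rule integrable_D_bounded[where B="v \<bullet> v"])
  fix x :: "real^'d" assume "norm x \<le> 1"
  then have "(v \<bullet> x)^2 \<le> v \<bullet> v" by (rule inner_square_le)
  then show "\<bar>h x * (v \<bullet> x)^2\<bar> \<le> v \<bullet> v"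
    using assms(2)[of x] by (simp add: abs_mult) (metis abs_ge_zero mult_left_le_one_le order_trans zero_le_power2)
qed (use assms(1) in measurable)

lemma integrable_play_prob_square: "integrable D (\<lambda>x. play_prob k x * (v \<bullet> x)^2)"
  using play_prob_pos play_prob_le_1
  by (intro integrable_weighted_square play_prob_measurable) (simp add: play_prob_def abs_le_iff less_imp_le)

lemma Sigma_tk_ge: "g0 * lam * (v \<bullet> v) \<le> v \<bullet> (Sigma_tk joint k *v v)"
proof -
  have "g0 * lam * (v \<bullet> v) \<le> g0 * (v \<bullet> (second_moment D *v v))"
    using lam_Rayleigh[of v] g0_nonneg by (simp add: mult.assoc mult_left_mono)
  also have "\<dots> = (\<integral>x. g0 * (v \<bullet> x)^2 \<partial>D)" by (simp add: second_moment_quadratic_form)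
  also have "\<dots> \<le> (\<integral>x. play_prob k x * (v \<bullet> x)^2 \<partial>D)"
    using integrable_weighted_square[of "\<lambda>_. 1" v] integrable_play_prob_square play_prob_ge
    by (intro integral_mono) (auto simp: play_prob_def mult_right_mono)
  finally show ?thesis by (simp add: Sigma_tk_quadratic_form)
qed

lemma Sigma_tk_le: "v \<bullet> (Sigma_tk joint k *v v) \<le> v \<bullet> v"
proof -
  have "(\<integral>x. play_prob k x * (v \<bullet> x)^2 \<partial>D) \<le> (\<integral>x. v \<bullet> v \<partial>D)"
  proof (rule integral_mono_AE[OF integrable_play_prob_square])
    show "AE x in D. play_prob k x * (v \<bullet> x)^2 \<le> v \<bullet> v"
      using D_unit_ball
    proof eventually_elim
      case (elim x)
      have "play_prob k x * (v \<bullet> x)^2 \<le> (v \<bullet> x)^2"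
        using play_prob_le_1 play_prob_pos by (intro mult_left_le_one_le) (auto simp: play_prob_def less_imp_le)
      with inner_square_le[OF elim, of v] show ?case by linarith
    qed
  qed simp
  then show ?thesis by (simp add: Sigma_tk_quadratic_form D.prob_space)
qed

lemma Sigma_tk_pos:
  assumes "v \<noteq> 0"
  shows "0 < v \<bullet> (Sigma_tk joint k *v v)"
proof (rule ccontr)
  have nonneg: "AE x in D. 0 \<le> play_prob k x * (v \<bullet> x)^2"
    using play_prob_pos by (intro AE_I2) (simp add: play_prob_def less_imp_le)
  assume "\<not> 0 < v \<bullet> (Sigma_tk joint k *v v)"
  then have "(\<integral>x. play_prob k x * (v \<bullet> x)^2 \<partial>D) = 0"
    using integral_nonneg_AE[OF nonneg] by (simp add: Sigma_tk_quadratic_form)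
  then have "AE x in D. play_prob k x * (v \<bullet> x)^2 = 0"
    using integral_nonneg_eq_0_iff_AE[OF integrable_play_prob_square nonneg] by simp
  then have "AE x in D. (v \<bullet> x)^2 = 0"
    by eventually_elim (use play_prob_pos in \<open>simp add: play_prob_def less_imp_neq[symmetric]\<close>)
  then have "(\<integral>x. (v \<bullet> x)^2 \<partial>D) = (\<integral>x. 0 \<partial>D)"
    by (intro integral_cong_AE) (simp_all add: measurable_D)
  then show False using second_moment_pos[OF assms] by (simp add: second_moment_quadratic_form)
qed

lemma Sigma_tk_symmetric: "transpose (Sigma_tk joint k) = Sigma_tk joint k"
  by (simp add: vec_eq_iff transpose_def Sigma_tk_def mult.commute mult.left_commute)

definition mean_step :: "'k \<Rightarrow> real^'d^'d" where
  "mean_step k = mat 1 - (1/2) *\<^sub>R Sigma_tk joint k"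

lemma iid_contractions_step_matrix: "iid_contractions joint (step_matrix k) (mean_step k)"
proof
  show "(\<lambda>z. step_matrix k z $ i $ j) \<in> borel_measurable joint" for i j
    unfolding step_matrix_entry by (rule measurable_joint(2)) simp
  show "(\<integral>z. step_matrix k z $ i $ j \<partial>joint) = mean_step k $ i $ j" for i j
    using integrable_sample_moment[of k i j]
    by (simp add: step_matrix_entry mean_step_def Sigma_tk_def joint.prob_space mult.assoc)
  show "AE z in joint. \<forall>v. norm (step_matrix k z *v v) \<le> norm v"
    using AE_joint_unit_ball AE_space[of joint]
  proof eventually_elim
    case (elim z)
    then have "norm (fst z) \<le> 1" "snd z \<in> actions m" by (auto simp: space_joint)
    then show ?case using step_matrix_contraction actions_component by blast
  qed
qed

lemma integrable_integral_Sigma_hat_plus: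
  fixes M :: nat
  defines "P \<equiv> \<Pi>\<^sub>M n\<in>{1..M}. joint"
  shows "integrable P (\<lambda>w. Sigma_hat_plus M k w $ i $ j)"
    and "(\<integral>w. Sigma_hat_plus M k w $ i $ j \<partial>P)
      = ((1/2) *\<^sub>R (mat 1 + (\<Sum>n\<in>{1..M}. matpow (mean_step k) n))) $ i $ j"
proof -
  interpret iid_contractions joint "step_matrix k" "mean_step k" by (rule iid_contractions_step_matrix)
  have entry: "Sigma_hat_plus M k w $ i $ j
      = (1/2) * (mat 1 $ i $ j + (\<Sum>n\<in>{1..M}. prod_matrices (step_matrix k) w n $ i $ j))" for w
    by (simp add: Sigma_hat_plus_def Cmat_eq_prod_matrices sum_component)
  have int: "integrable P (\<lambda>w. prod_matrices (step_matrix k) w n $ i $ j)" if "n \<in> {1..M}" for n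
    using integrable_prod_matrices that by (simp add: P_def)
  have P: "prob_space P" unfolding P_def by (rule prob_space_PiM)
  have int_sum: "integrable P (\<lambda>w. \<Sum>n\<in>{1..M}. prod_matrices (step_matrix k) w n $ i $ j)"
    using int by (rule Bochner_Integration.integrable_sum)
  have int_one: "integrable P (\<lambda>w. mat 1 $ i $ j :: real)"
    by (rule finite_measure.integrable_const[OF prob_space.finite_measure[OF P]])
  show "integrable P (\<lambda>w. Sigma_hat_plus M k w $ i $ j)"
    unfolding entry using int_one int_sum by (intro integrable_mult_right Bochner_Integration.integrable_add)
  have "(\<integral>w. Sigma_hat_plus M k w $ i $ j \<partial>P)
      = (1/2) * (mat 1 $ i $ j + (\<Sum>n\<in>{1..M}. \<integral>w. prod_matrices (step_matrix k) w n $ i $ j \<partial>P))"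
    unfolding entry integral_mult_right_zero Bochner_Integration.integral_add[OF int_one int_sum]
    using int prob_space.prob_space[OF P] by (simp add: Bochner_Integration.integral_sum)
  also have "\<dots> = ((1/2) *\<^sub>R (mat 1 + (\<Sum>n\<in>{1..M}. matpow (mean_step k) n))) $ i $ j"
    using integral_prod_matrices by (simp add: P_def sum_component)
  finally show "(\<integral>w. Sigma_hat_plus M k w $ i $ j \<partial>P)
      = ((1/2) *\<^sub>R (mat 1 + (\<Sum>n\<in>{1..M}. matpow (mean_step k) n))) $ i $ j" .
qed

text \<open>The vector X (A)_k <X, theta_k> whose image under an estimate of Sigma_tk^{-1} gives the
  loss estimate of arm k; the losses are linear, l(x, k) = <x, theta_k>.\<close>
definition loss_sample :: "real^'d \<Rightarrow> 'k \<Rightarrow> (real^'d) \<times> (real^'k) \<Rightarrow> real^'d" where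
  "loss_sample th k z = ((fst z \<bullet> th) * (snd z)$k) *\<^sub>R fst z"

lemma integrable_integral_loss_sample:
  shows "integrable joint (\<lambda>z. loss_sample th k z $ j)"
    and "(\<integral>z. loss_sample th k z $ j \<partial>joint) = (Sigma_tk joint k *v th) $ j"
proof -
  have entry: "loss_sample th k z $ j = (\<Sum>l\<in>UNIV. th$l * ((snd z)$k * (fst z)$j * (fst z)$l))" for z
    by (simp add: loss_sample_def inner_vec_def sum_distrib_left sum_distrib_right algebra_simps)
  have int: "integrable joint (\<lambda>z. th$l * ((snd z)$k * (fst z)$j * (fst z)$l))" for l
    using integrable_sample_moment by simp
  show "integrable joint (\<lambda>z. loss_sample th k z $ j)"
    unfolding entry by (intro Bochner_Integration.integrable_sum int)
  show "(\<integral>z. loss_sample th k z $ j \<partial>joint) = (Sigma_tk joint k *v th) $ j"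
    unfolding entry using int integrable_sample_moment
    by (simp add: Bochner_Integration.integral_sum matrix_vector_mult_def Sigma_tk_def mult.commute)
qed

lemma integrable_integral_inverse_estimate:
  fixes M :: nat
  defines "P \<equiv> \<Pi>\<^sub>M n\<in>{1..M}. joint"
  shows "integrable (joint \<Otimes>\<^sub>M P) (\<lambda>\<omega>. x \<bullet> (matrix_inv (Sigma_tk joint k) *v loss_sample th k (fst \<omega>)))"
    and "(\<integral>\<omega>. x \<bullet> (matrix_inv (Sigma_tk joint k) *v loss_sample th k (fst \<omega>)) \<partial>(joint \<Otimes>\<^sub>M P)) = x \<bullet> th"
proof -
  have P: "prob_space P"
    unfolding P_def by (rule iid_contractions.prob_space_PiM[OF iid_contractions_step_matrix])
  have const: "integrable P (\<lambda>w. matrix_inv (Sigma_tk joint k) $ i $ j)"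
    "(\<integral>w. matrix_inv (Sigma_tk joint k) $ i $ j \<partial>P) = matrix_inv (Sigma_tk joint k) $ i $ j" for i j
    using prob_space.prob_space[OF P] finite_measure.integrable_const[OF prob_space.finite_measure[OF P]]
    by simp_all
  note bilinear = integrable_integral_pair_bilinear[OF prob_space_joint P
      integrable_integral_loss_sample[of th k] const, where x=x]
  have "\<forall>v. Sigma_tk joint k *v v = 0 \<longrightarrow> v = 0"
    using Sigma_tk_pos[of _ k] by (metis inner_zero_right less_irrefl)
  then have "matrix_inv (Sigma_tk joint k) *v (Sigma_tk joint k *v th) = th"
    by (rule matrix_inv_mult_cancel)
  then show "integrable (joint \<Otimes>\<^sub>M P) (\<lambda>\<omega>. x \<bullet> (matrix_inv (Sigma_tk joint k) *v loss_sample th k (fst \<omega>)))"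
    and "(\<integral>\<omega>. x \<bullet> (matrix_inv (Sigma_tk joint k) *v loss_sample th k (fst \<omega>)) \<partial>(joint \<Otimes>\<^sub>M P)) = x \<bullet> th"
    using bilinear prob_space.prob_space[OF P] by simp_all
qed

lemma integrable_integral_MGR_estimate:
  fixes M :: nat
  defines "P \<equiv> \<Pi>\<^sub>M n\<in>{1..M}. joint"
  shows "integrable (joint \<Otimes>\<^sub>M P) (\<lambda>\<omega>. x \<bullet> (Sigma_hat_plus M k (snd \<omega>) *v loss_sample th k (fst \<omega>)))"
    and "(\<integral>\<omega>. x \<bullet> (Sigma_hat_plus M k (snd \<omega>) *v loss_sample th k (fst \<omega>)) \<partial>(joint \<Otimes>\<^sub>M P))
      = x \<bullet> th - x \<bullet> (matpow (mean_step k) (Suc M) *v th)"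
proof -
  have P: "prob_space P"
    unfolding P_def by (rule iid_contractions.prob_space_PiM[OF iid_contractions_step_matrix])
  note bilinear = integrable_integral_pair_bilinear[OF prob_space_joint P
      integrable_integral_loss_sample[of th k] integrable_integral_Sigma_hat_plus[of M k, folded P_def],
      where x=x]
  show "integrable (joint \<Otimes>\<^sub>M P) (\<lambda>\<omega>. x \<bullet> (Sigma_hat_plus M k (snd \<omega>) *v loss_sample th k (fst \<omega>)))"
    by (rule bilinear(1))
  show "(\<integral>\<omega>. x \<bullet> (Sigma_hat_plus M k (snd \<omega>) *v loss_sample th k (fst \<omega>)) \<partial>(joint \<Otimes>\<^sub>M P))
      = x \<bullet> th - x \<bullet> (matpow (mean_step k) (Suc M) *v th)"
    unfolding bilinear(2) mean_step_def Neumann_sum_telescope by (simp add: inner_diff_right)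
qed

text \<open>The conditional expectation of the lemma: the first component of the sample point is
  the pair (X_t, A_t) of the round, the second one the M fresh pairs used by the estimator.\<close>
definition expected_gap :: "nat \<Rightarrow> ('k \<Rightarrow> real^'d) \<Rightarrow> real^'d \<Rightarrow> real^'k \<Rightarrow> real" where
  "expected_gap M theta x A = (\<integral>\<omega>. (\<Sum>k\<in>UNIV.
              (x \<bullet> (matrix_inv (Sigma_tk joint k) *v (((fst (fst \<omega>) \<bullet> theta k) * (snd (fst \<omega>))$k) *\<^sub>R fst (fst \<omega>))
                   - Sigma_hat_plus M k (snd \<omega>) *v (((fst (fst \<omega>) \<bullet> theta k) * (snd (fst \<omega>))$k) *\<^sub>R fst (fst \<omega>))))
              * A$k)
           \<partial>(joint \<Otimes>\<^sub>M (\<Pi>\<^sub>M n\<in>{1..M}. joint)))"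

lemma expected_gap_eq:
  "expected_gap M theta x A = (\<Sum>k\<in>UNIV. A$k * (x \<bullet> (matpow (mean_step k) (Suc M) *v theta k)))"
proof -
  let ?P = "joint \<Otimes>\<^sub>M (\<Pi>\<^sub>M n\<in>{1..M}. joint)"
  have "(\<Sum>k\<in>UNIV.
              (x \<bullet> (matrix_inv (Sigma_tk joint k) *v (((fst (fst \<omega>) \<bullet> theta k) * (snd (fst \<omega>))$k) *\<^sub>R fst (fst \<omega>))
                   - Sigma_hat_plus M k (snd \<omega>) *v (((fst (fst \<omega>) \<bullet> theta k) * (snd (fst \<omega>))$k) *\<^sub>R fst (fst \<omega>))))
              * A$k)
      = (\<Sum>k\<in>UNIV. A$k * (x \<bullet> (matrix_inv (Sigma_tk joint k) *v loss_sample (theta k) k (fst \<omega>)))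
          - A$k * (x \<bullet> (Sigma_hat_plus M k (snd \<omega>) *v loss_sample (theta k) k (fst \<omega>))))" for \<omega>
    by (simp add: loss_sample_def inner_diff_right algebra_simps)
  moreover have "(\<integral>\<omega>. A$k * (x \<bullet> (matrix_inv (Sigma_tk joint k) *v loss_sample (theta k) k (fst \<omega>)))
          - A$k * (x \<bullet> (Sigma_hat_plus M k (snd \<omega>) *v loss_sample (theta k) k (fst \<omega>))) \<partial>?P)
      = A$k * (x \<bullet> (matpow (mean_step k) (Suc M) *v theta k))" for k
  proof -
    have ints: "integrable ?P (\<lambda>\<omega>. A$k * (x \<bullet> (matrix_inv (Sigma_tk joint k) *v loss_sample (theta k) k (fst \<omega>))))"
      "integrable ?P (\<lambda>\<omega>. A$k * (x \<bullet> (Sigma_hat_plus M k (snd \<omega>) *v loss_sample (theta k) k (fst \<omega>))))"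
      by (intro integrable_mult_right integrable_integral_inverse_estimate integrable_integral_MGR_estimate)+
    show ?thesis
      unfolding Bochner_Integration.integral_diff[OF ints] integral_mult_right_zero
        integrable_integral_inverse_estimate(2) integrable_integral_MGR_estimate(2)
      by (simp add: right_diff_distrib del: matpow.simps)
  qed
  ultimately show ?thesis
    unfolding expected_gap_def
    using integrable_integral_inverse_estimate(1) integrable_integral_MGR_estimate(1)
    by (simp add: Bochner_Integration.integral_sum Bochner_Integration.integrable_diff del: matpow.simps)
qed

lemma g0_lam_le_1: "g0 * lam \<le> 1"
  using Sigma_tk_ge[of "axis undefined 1" undefined] Sigma_tk_le[of "axis undefined 1" undefined]
  by (simp add: inner_axis_axis)

lemma mean_step_norm_le: "norm (mean_step k *v v) \<le> (1 - g0 * lam / 2) * norm v"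
proof (rule psd_matrix_norm_le)
  have quadratic: "u \<bullet> (mean_step k *v u) = u \<bullet> u - (1/2) * (u \<bullet> (Sigma_tk joint k *v u))" for u
    by (simp add: mean_step_def matrix_vector_mult_diff_rdistrib
        scaleR_matrix_vector_assoc[symmetric] inner_diff_right)
  show "transpose (mean_step k) = mean_step k"
    using Sigma_tk_symmetric[of k] by (simp add: mean_step_def vec_eq_iff transpose_def mat_def)
  show "0 \<le> 1 - g0 * lam / 2" using g0_lam_le_1 by simp
  show "\<forall>u. 0 \<le> u \<bullet> (mean_step k *v u)"
  proof
    fix u :: "real^'d"
    have "u \<bullet> (Sigma_tk joint k *v u) \<le> u \<bullet> u" "0 \<le> u \<bullet> u" by (rule Sigma_tk_le) simp
    then show "0 \<le> u \<bullet> (mean_step k *v u)" unfolding quadratic by linarith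
  qed
  show "\<forall>u. u \<bullet> (mean_step k *v u) \<le> (1 - g0 * lam / 2) * (u \<bullet> u)"
  proof
    fix u :: "real^'d"
    show "u \<bullet> (mean_step k *v u) \<le> (1 - g0 * lam / 2) * (u \<bullet> u)"
      unfolding quadratic using Sigma_tk_ge[of u k] by (simp add: algebra_simps)
  qed
qed

lemma inner_matpow_mean_step_le:
  assumes "norm x \<le> 1" "norm th \<le> 1"
  shows "x \<bullet> (matpow (mean_step k) n *v th) \<le> (1 - g0 * lam / 2)^n"
proof -
  have power: "norm (matpow (mean_step k) n *v v) \<le> (1 - g0 * lam / 2)^n * norm v" for v
  proof (induction n arbitrary: v)
    case (Suc n)
    have "norm (matpow (mean_step k) (Suc n) *v v) \<le> (1 - g0 * lam / 2)^n * norm (mean_step k *v v)"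
      unfolding matpow_Suc_mult_vector by (rule Suc.IH)
    also have "\<dots> \<le> (1 - g0 * lam / 2)^n * ((1 - g0 * lam / 2) * norm v)"
      using mean_step_norm_le g0_lam_le_1 by (intro mult_left_mono) auto
    finally show ?case by (simp add: algebra_simps)
  qed simp
  have "x \<bullet> (matpow (mean_step k) n *v th) \<le> norm x * norm (matpow (mean_step k) n *v th)"
    by (rule norm_cauchy_schwarz)
  also have "\<dots> \<le> 1 * ((1 - g0 * lam / 2)^n * norm th)"
    using assms(1) power[of th] by (intro mult_mono) auto
  also have "\<dots> \<le> (1 - g0 * lam / 2)^n"
    using assms(2) g0_lam_le_1 by (simp add: mult_left_le)
  finally show ?thesis .
qed

lemma expected_gap_le:
  assumes "A \<in> actions m" "norm x \<le> 1" "\<And>k. norm (theta k) \<le> 1"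
  shows "expected_gap M theta x A \<le> real m * (1 - g0 * lam / 2)^(Suc M)"
proof -
  have "(\<Sum>k\<in>UNIV. A$k * (x \<bullet> (matpow (mean_step k) (Suc M) *v theta k)))
      \<le> (\<Sum>k\<in>UNIV. A$k * (1 - g0 * lam / 2)^(Suc M))"
  proof (rule sum_mono)
    fix k
    show "A$k * (x \<bullet> (matpow (mean_step k) (Suc M) *v theta k)) \<le> A$k * (1 - g0 * lam / 2)^(Suc M)"
      using actions_component[OF assms(1), of k] inner_matpow_mean_step_le[OF assms(2,3), of k "Suc M"]
      by (intro mult_left_mono) auto
  qed
  also have "\<dots> \<le> real m * (1 - g0 * lam / 2)^(Suc M)"
    using assms(1) g0_lam_le_1 by (simp add: sum_distrib_right[symmetric] actions_def mult_right_mono)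
  finally show ?thesis unfolding expected_gap_eq .
qed

end

section \<open>Parameters of the algorithm\<close>

lemma exploration_rate_bounds:
  fixes lam :: real and m T t :: nat and Xs :: "nat \<Rightarrow> real^'d"
    and th :: "nat \<Rightarrow> 'k::finite \<Rightarrow> real^'d"
  defines "eta \<equiv> eta_t lam m T Xs th t"
  assumes "0 < lam" and "1 \<le> t" "t \<le> T"
  shows "0 < eta" and "0 \<le> alpha_t lam CARD('k) t * eta" and "alpha_t lam CARD('k) t * eta \<le> 1/2"
proof -
  define \<beta> where "\<beta> = beta_of lam CARD('k) T (fst (bstate lam m T Xs th (t - 1)))"
  have "2 \<le> \<beta>" "8 * real CARD('k) / lam * ln (real T) \<le> \<beta>"
    unfolding \<beta>_def beta_of_def c2_def by simp_all
  have eta: "eta = 1 / \<beta>" by (simp add: eta_def eta_t_def \<beta>_def)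
  then show "0 < eta" using \<open>2 \<le> \<beta>\<close> by simp
  have "0 \<le> ln (real t)" "ln (real t) \<le> ln (real T)" using assms(3,4) by simp_all
  then show "0 \<le> alpha_t lam CARD('k) t * eta"
    using \<open>0 < lam\<close> \<open>2 \<le> \<beta>\<close> by (simp add: alpha_t_def eta)
  have "4 * real CARD('k) * ln (real t) / lam \<le> 4 * real CARD('k) * ln (real T) / lam"
    using \<open>ln (real t) \<le> ln (real T)\<close> \<open>0 < lam\<close> by (simp add: divide_right_mono)
  also have "\<dots> \<le> \<beta> / 2" using \<open>8 * real CARD('k) / lam * ln (real T) \<le> \<beta>\<close> by simp
  finally show "alpha_t lam CARD('k) t * eta \<le> 1/2"
    using \<open>2 \<le> \<beta>\<close> \<open>0 < lam\<close> by (simp add: alpha_t_def eta field_simps)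
qed

text \<open>For t \<ge> 2 the choice of M_t gives (1 - y)^M \<le> exp (- y M) \<le> exp (- 2 ln t) with
  y = gam lam / (2 K); for t = 1 the bound 1 / t^2 = 1 is trivial.\<close>
lemma contraction_power_M_t_le:
  fixes K t :: nat and lam eta :: real
  defines "gam \<equiv> alpha_t lam K t * eta"
  assumes "0 < lam" "0 < eta" "1 \<le> t" "0 < K" and "0 \<le> 1 - gam / K * lam / 2"
  shows "(1 - gam / K * lam / 2) ^ Suc (M_t lam K t eta) \<le> 1 / (real t)^2"
proof (cases "t = 1")
  case True
  have "0 \<le> gam" using assms(2,3) by (simp add: gam_def alpha_t_def True)
  then have "(1 - gam / K * lam / 2) ^ Suc (M_t lam K t eta) \<le> 1"
    using assms(2,6) by (intro power_le_one) auto
  then show ?thesis using True by simp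
next
  case False
  define y where "y = gam * lam / (2 * K)"
  define M where "M = M_t lam K t eta"
  have "0 < ln (real t)" using False \<open>1 \<le> t\<close> by simp
  then have "0 < gam" using assms(2-5) by (simp add: gam_def alpha_t_def)
  have "4 * real K * ln (real t) / (gam * lam) \<le> real M"
    using False real_nat_ceiling_ge by (simp add: M_def M_t_def gam_def)
  then have "y * (4 * real K * ln (real t) / (gam * lam)) \<le> y * real M"
    using \<open>0 < gam\<close> assms(2,5) by (intro mult_left_mono) (simp_all add: y_def)
  then have "2 * ln (real t) \<le> y * real M"
    using \<open>0 < gam\<close> assms(2,5) by (simp add: y_def field_simps)
  have "1 - gam / K * lam / 2 = 1 - y" by (simp add: y_def)
  moreover have "(1 - y) ^ Suc M \<le> (1 - y) ^ M"
    using assms(6) \<open>0 < gam\<close> assms(2,5)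
    by (intro power_decreasing) (simp_all add: y_def \<open>1 - gam / K * lam / 2 = 1 - y\<close>[symmetric])
  ultimately have "(1 - gam / K * lam / 2) ^ Suc M \<le> (1 - y) ^ M" by simp
  also have "\<dots> \<le> exp (- y) ^ M"
    using assms(6) \<open>1 - gam / K * lam / 2 = 1 - y\<close>
    by (intro power_mono) (use exp_ge_add_one_self[of "- y"] in auto)
  also have "\<dots> = exp (- (y * real M))" by (simp add: exp_of_nat_mult[symmetric] mult.commute)
  also have "\<dots> \<le> exp (- (2 * ln (real t)))" using \<open>2 * ln (real t) \<le> y * real M\<close> by simp
  also have "\<dots> = 1 / exp (ln (real t)) ^ 2"
    using exp_of_nat_mult[of 2 "ln (real t)"] by (simp add: exp_minus field_simps)
  also have "\<dots> = 1 / (real t)^2" using \<open>1 \<le> t\<close> by simp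
  finally show ?thesis by (simp add: M_def)
qed

lemma sum_basis_actions_component:
  fixes k :: "'k::finite"
  assumes "1 \<le> m"
  shows "(\<Sum>a\<in>actions m. if a \<in> basis_actions then c * a$k else 0) = (c :: real)"
  using sum_basis_actions[OF assms, of "\<lambda>a::real^'k. c * a$k"]
  by (simp add: axis_def if_distrib[of "\<lambda>z. c * z"] cong: if_cong)

lemma mix_policy_sum:
  assumes "1 \<le> m" and "(\<Sum>a\<in>actions m. p y a) = 1"
  shows "(\<Sum>a\<in>actions m. mix_policy gam p y (a :: real^'k)) = 1"
proof -
  have "(\<Sum>a::real^'k\<in>actions m. if a \<in> basis_actions then 1 / real CARD('k) else 0) = 1"
    using sum_basis_actions[OF assms(1), of "\<lambda>_::real^'k. 1 / real CARD('k)"] by simp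
  then show ?thesis
    using assms(2) by (simp add: mix_policy_def sum.distrib flip: sum_distrib_left)
qed

lemma mix_policy_play_prob:
  assumes "1 \<le> m"
  shows "(\<Sum>a\<in>actions m. mix_policy gam p y a * a$k)
    = (1 - gam) * (\<Sum>a\<in>actions m. p y a *\<^sub>R (a :: real^'k)) $ k + gam / real CARD('k)"
proof -
  have "(\<Sum>a\<in>actions m. mix_policy gam p y a * a$k)
      = (\<Sum>a\<in>actions m. (1 - gam) * (p y a * a$k)
          + gam * (if a \<in> basis_actions then 1 / real CARD('k) * a$k else 0))"
    by (intro sum.cong) (simp_all add: mix_policy_def algebra_simps)
  also have "\<dots> = (1 - gam) * (\<Sum>a\<in>actions m. p y a * a$k) + gam / real CARD('k)"
    by (simp add: sum.distrib sum_basis_actions_component[OF assms] flip: sum_distrib_left)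
  finally show ?thesis by (simp add: sum_component)
qed

lemma exploring_policy_mix_policy:
  fixes D :: "(real^'d) measure" and p :: "real^'d \<Rightarrow> real^'k::finite \<Rightarrow> real"
    and th :: "nat \<Rightarrow> 'k \<Rightarrow> real^'d"
  assumes D: "prob_space D" "sets D = sets borel" "AE x in D. norm x \<le> 1"
    and lam: "\<And>v. lam * (v \<bullet> v) \<le> v \<bullet> (second_moment D *v v)"
      "\<And>v. v \<noteq> 0 \<Longrightarrow> 0 < v \<bullet> (second_moment D *v v)"
    and "1 \<le> m" "0 < eta" "0 \<le> gam" "gam < 1"
    and p_nonneg: "\<And>y a. 0 \<le> p y a" and p_sum: "\<And>y. (\<Sum>a\<in>actions m. p y a) = 1"
    and p_mean: "\<And>y. (\<Sum>a\<in>actions m. p y a *\<^sub>R a) = abar m th t eta y"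
    and p_measurable: "\<And>a. (\<lambda>y. p y a) \<in> borel_measurable borel"
  shows "exploring_policy D m (mix_policy gam p) (gam / real CARD('k)) lam"
proof (intro exploring_policy.intro context_policy.intro exploring_policy_axioms.intro)
  have play_prob: "(\<Sum>a\<in>actions m. mix_policy gam p y a * a$k)
      = (1 - gam) * abar m th t eta y $ k + gam / real CARD('k)" for y k
    unfolding mix_policy_play_prob[OF \<open>1 \<le> m\<close>] p_mean ..
  have "0 < (1 - gam) * abar m th t eta y $ k" for y k
    using abar_component_pos[OF \<open>1 \<le> m\<close> \<open>0 < eta\<close>] \<open>gam < 1\<close> by (intro mult_pos_pos) simp_all
  then show "0 < (\<Sum>a\<in>actions m. mix_policy gam p y a * a$k)"
    and "gam / real CARD('k) \<le> (\<Sum>a\<in>actions m. mix_policy gam p y a * a$k)" for y k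
    unfolding play_prob using \<open>0 \<le> gam\<close> by (simp_all add: add_pos_nonneg less_imp_le)
  show "0 \<le> mix_policy gam p y a" for y a
    using p_nonneg \<open>0 \<le> gam\<close> \<open>gam < 1\<close> by (simp add: mix_policy_def)
  show "(\<Sum>a\<in>actions m. mix_policy gam p y a) = 1" for y
    using mix_policy_sum[OF \<open>1 \<le> m\<close> p_sum] .
  have "(\<lambda>y. mix_policy gam p y a) \<in> borel_measurable borel" for a
    unfolding mix_policy_def
    by (intro borel_measurable_add borel_measurable_times borel_measurable_const p_measurable)
  then show "(\<lambda>y. mix_policy gam p y a) \<in> borel_measurable D" for a
    using measurable_cong_sets[OF D(2) refl] by blast
  show "0 \<le> gam / real CARD('k)" using \<open>0 \<le> gam\<close> by simp
qed (fact D lam finite_actions)+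

theorem lemma2:
  fixes D :: "(real^'d) measure"
    and m T t :: nat
    and Xs :: "nat \<Rightarrow> real^'d"
    and th :: "nat \<Rightarrow> 'k::finite \<Rightarrow> real^'d"
    and theta :: "'k \<Rightarrow> real^'d"
    and p :: "real^'d \<Rightarrow> real^'k \<Rightarrow> real"
    and x :: "real^'d"
  defines "lam \<equiv> lambda_min (second_moment D)"
  defines "eta \<equiv> eta_t lam m T Xs th t"
  defines "gam \<equiv> alpha_t lam CARD('k) t * eta"
  defines "M \<equiv> M_t lam CARD('k) t eta"
  defines "Q \<equiv> pair_law D m (mix_policy gam p)"
  assumes K2: "CARD('k) \<ge> 2"
    and m_pos: "1 \<le> m" and m_lt: "m < CARD('k)"
    and T3: "T \<ge> 3"
    and t_range: "t \<in> {1..T}"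
    and D_prob: "prob_space D" and D_sets: "sets D = sets borel"
    and D_bdd: "AE y in D. norm y \<le> 1"
    and Sigma_pd: "\<forall>v. v \<noteq> 0 \<longrightarrow> v \<bullet> (second_moment D *v v) > 0"
    and c1_ge: "c1 lam CARD('d) CARD('k) m T \<ge> 1"
    and theta_bdd: "\<forall>k. norm (theta k) \<le> 1"
    and p_nonneg: "\<forall>y a. p y a \<ge> 0"
    and p_supp: "\<forall>y a. a \<notin> actions m \<longrightarrow> p y a = 0"
    and p_sum: "\<forall>y. (\<Sum>a\<in>actions m. p y a) = 1"
    and p_mean: "\<forall>y. (\<Sum>a\<in>actions m. p y a *\<^sub>R a) = abar m th t eta y"
    and p_meas: "\<forall>a. (\<lambda>y. p y a) \<in> borel_measurable borel"
    and x_bdd: "norm x \<le> 1"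
  shows "Max ((\<lambda>A. \<integral>\<omega>. (\<Sum>k\<in>UNIV.
              (x \<bullet> (matrix_inv (Sigma_tk Q k) *v (((fst (fst \<omega>) \<bullet> theta k) * (snd (fst \<omega>))$k) *\<^sub>R fst (fst \<omega>))
                   - Sigma_hat_plus M k (snd \<omega>) *v (((fst (fst \<omega>) \<bullet> theta k) * (snd (fst \<omega>))$k) *\<^sub>R fst (fst \<omega>))))
              * A$k)
           \<partial>(Q \<Otimes>\<^sub>M (\<Pi>\<^sub>M n\<in>{1..M}. Q))) ` actions m)
         \<le> real m / (real t)^2"
proof -
  have sym: "transpose (second_moment D) = second_moment D"
    by (simp add: second_moment_def vec_eq_iff transpose_def mult.commute)
  have lam_Rayleigh: "\<And>v. lam * (v \<bullet> v) \<le> v \<bullet> (second_moment D *v v)"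
    unfolding lam_def by (rule lambda_min_le_Rayleigh[OF sym])
  have "0 < lam" unfolding lam_def using Sigma_pd by (intro lambda_min_pos[OF sym]) auto
  have "0 < eta" "0 \<le> gam" "gam \<le> 1/2"
    using exploration_rate_bounds[OF \<open>0 < lam\<close>] t_range unfolding eta_def gam_def by auto
  then have "gam < 1" by linarith
  interpret exploring_policy D m "mix_policy gam p" "gam / real CARD('k)" lam
    by (rule exploring_policy_mix_policy[OF D_prob D_sets D_bdd lam_Rayleigh Sigma_pd[rule_format]
          m_pos \<open>0 < eta\<close> \<open>0 \<le> gam\<close> \<open>gam < 1\<close> p_nonneg[rule_format] p_sum[rule_format]
          p_mean[rule_format] p_meas[rule_format]])
  have "0 \<le> 1 - gam / real CARD('k) * lam / 2" using g0_lam_le_1 by simp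
  then have "(1 - gam / real CARD('k) * lam / 2) ^ Suc M \<le> 1 / (real t)^2"
    unfolding M_def gam_def using \<open>0 < lam\<close> \<open>0 < eta\<close> t_range
    by (intro contraction_power_M_t_le) auto
  then have "real m * (1 - gam / real CARD('k) * lam / 2) ^ Suc M \<le> real m * (1 / (real t)^2)"
    by (rule mult_left_mono) simp
  then have bound: "real m * (1 - gam / real CARD('k) * lam / 2) ^ Suc M \<le> real m / (real t)^2"
    by simp
  have "Q = joint" unfolding Q_def pair_law_def joint_def ..
  then show ?thesis
    unfolding \<open>Q = joint\<close> expected_gap_def[symmetric]
    using zero_in_actions[of m, where 'a='k] bound
      order_trans[OF expected_gap_le[where theta=theta, OF _ x_bdd theta_bdd[rule_format]]]
    by (intro Max.boundedI finite_imageI finite_actions) auto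
qed

end
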